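(* Let $(K,\le)$ be an AEC with a system of pregeometries $(\mathrm{cl}_M)_{M\in K}$, and let $\mathscr A$ be defined by: for $M_0\le M_1,M_2\le N$, $N$ is an $\mathscr A$-amalgam of $M_1,M_2$ over $M_0$ by inclusion iff there are $B_1,B_2\subseteq N$ such that $B_1\cup B_2$ is $\mathrm{cl}_N$-independent, $\mathrm{cl}_N(B_1\cup B_2)=N$, $\mathrm{cl}_N(B_1)=M_1$, $\mathrm{cl}_N(B_2)=M_2$ and $\mathrm{cl}_N(B_1\cap B_2)=M_0$ (and $(N,g_1,g_2)\in\mathscr A(M_0,M_1,M_2,f)$ iff $N$ is an $\mathscr A$-amalgam of $g_1[M_1],g_2[M_2]$ over $g_1[M_0]$ by inclusion). Then $\mathscr A$ is regular, absolutely minimal, 3-monotonic, continuous and admits decompositions, and $\mu(K)=\aleph_0$.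
   Context: An AEC $(K,\le)$: a class of structures in a language $\tau$ closed under isomorphism, with a partial order $\le$ refining substructure and preserved under isomorphism, satisfying Löwenheim–Skolem (cardinal $\mathrm{LS}(K)$), Tarski–Vaught chain axioms (union of an increasing continuous chain is in $K$, each member $\le$ the union, and if each member is $\le N$ then the union is $\le N$) and coherence ($M_1,M_2\le N$, $M_1\subseteq M_2$ imply $M_1\le M_2$). A $K$-embedding $f:M\to N$ is an isomorphism onto $f[M]$ with $f[M]\le N$; $\iota$ denotes inclusions. A system of pregeometries for $K$: operators $\mathrm{cl}_M:\mathcal P(M)\to\mathcal P(M)$ for $M\in K$ such that (1) each $(M,\mathrm{cl}_M)$ is a pregeometry: $X\subseteq\mathrm{cl}_M(X)=\mathrm{cl}_M(\mathrm{cl}_M(X))$, monotone, finite character (if $a\in\mathrm{cl}_M(X)$ then $a\in\mathrm{cl}_M(X_0)$ for some finite $X_0\subseteq X$), and exchange ($b\in\mathrm{cl}_M(A\cup\{a\})\setminus\mathrm{cl}_M(A)$ implies $a\in\mathrm{cl}_M(A\cup\{b\})$); (2) if $M\le N$ then $\mathrm{cl}_M\subseteq\mathrm{cl}_N$, in particular $M=\mathrm{cl}_M(M)=\mathrm{cl}_N(M)$; (3) if $B\subseteq N$, $B=\mathrm{cl}_N(B)$ and some $M_0\le N$ has $M_0\subseteq B$, then $B$ is the universe of some $M\le N$. Independence and bases are with respect to $\mathrm{cl}_N$. Properties of $\mathscr A$ (a class of amalgams $\mathscr A(M_0,M_1,M_2,f)$ of triples $(N,g_1,g_2)$, $g_2\circ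 f=g_1\restriction M_0$): "$N$ is an $\mathscr A$-amalgam of $M_1,M_2$ over $M_0$ by inclusion" means $(N,\iota,\iota)\in\mathscr A(M_0,M_1,M_2,\iota)$; "subamalgamated inside $N$" means some $N'\le N$ is such an amalgam, denoted $M_1\oplus^N_{M_0}M_2$ when unique. Absolutely minimal: for $(N,g_1,g_2)\in\mathscr A(M_0,M_1,M_2,f)$, $N^*\ge N$, $N'\le N^*$ with $g_1[M_1]\cup g_2[M_2]\subseteq N'$, we get $N\le N'$. Regular: for a commutative square $g_2\circ f=g_1\restriction M_0$ ($M_0\le M_1$), TFAE (i) $(N,g_1,g_2)\in\mathscr A(M_0,M_1,M_2,f)$; (ii) there are $M_0\le M'\le M_1$ and $g_2[M_2]\le N'\le N$ with $(N',g_1\restriction M',g_2)\in\mathscr A(M_0,M',M_2,f)$ and $(N,g_1,\iota)\in\mathscr A(M',M_1,N',g_1\restriction M')$; (iii) for every $M_0\le M'\le M_1$ there is $N'\le N$ with $(N',g_1\restriction M',g_2)\in\mathscr A(M_0,M',M_2,f)$, and for every such $N'$, $(N,g_1,\iota)\in\mathscr A(M',M_1,N',g_1\restriction M')$. Continuous: if $\delta$ is a limit, $(M_i)_{i<\delta},(N_i)_{i<\delta}$ increasing continuous chains, $f_i:M_i\to N_i$ increasing $K$-embeddings with $(N_{i+1},f_{i+1},\iota)\in\mathscr A(M_i,M_{i+1},N_i,f_i)$ for all $i+1<\delta$, then $(\bigcup N_i,\bigcup f_i,\iota)\in\mathscr A(M_0,\bigcup M_i,N_0,f_0)$. Admits decompositions: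 for $M_0\le M_1\le N$ there is $M_0\le M_2\le N$ with $N$ an $\mathscr A$-amalgam of $M_1,M_2$ over $M_0$ by inclusion. 3-monotonic: whenever $M_0\le M_1,M_2,M_3\le N$, $M_1,M_2$ are subamalgamated over $M_0$ inside $N$, and $N$ is the $\mathscr A$-amalgam of $M_3$ and $M_1\oplus^N_{M_0}M_2$ over $M_0$ by inclusion, then $N$ is the $\mathscr A$-amalgam of $M_1\oplus^N_{M_0}M_3$ and $M_2\oplus^N_{M_0}M_3$ over $M_3$ by inclusion. Sequential amalgam: $N$ is an $\mathscr A$-amalgam of $(M_i)_{i<\alpha}$ over $M_b$ by inclusion if there is an increasing continuous chain $(N_i)_{i<s(\alpha)}$ with union $N$ ($s(\alpha)=\alpha$ for limit $\alpha$, else $\alpha+1$), $N_0=M_b$, $N_1=M_0$, and $N_{i+1}$ an $\mathscr A$-amalgam of $N_i,M_i$ over $M_b$ by inclusion for $1\le i<\alpha$; the unique one inside $N$ is $\bigoplus^N_{M_b,i\in S}M_i$. $\mu(a,M)$ is the least $\mu$ such that whenever $M$ is an $\mathscr A$-amalgam of $(M_i)_{i<\alpha}$ over some $M_b\le M$ by inclusion, $a\in\bigoplus^M_{M_b,j\in S}M_j$ for some $S\subseteq\alpha$ with $|S|<\mu$; $\mu(K)=\sup_{M,a}\mu(a,M)$. *)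

theory Defs
  imports Main "HOL-Library.FuncSet" "HOL-Library.Equipollence"
begin

text \<open>A language is given by the arities of its function symbols (type 'f) and of its
relation symbols (type 'r).
Interpretations are canonical: outside the universe / wrong arity they are undefined/False,
so a substructure of N is determined by its universe.\<close>

record ('a, 'f, 'r) struc =
  univ :: "'a set"
  fint :: "'f \<Rightarrow> 'a list \<Rightarrow> 'a"
  rint :: "'r \<Rightarrow> 'a list \<Rightarrow> bool"

type_synonym ('f, 'r) lang = "('f \<Rightarrow> nat) \<times> ('r \<Rightarrow> nat)"

definition tup :: "nat \<Rightarrow> 'a set \<Rightarrow> 'a list \<Rightarrow> bool" where
  "tup n X xs \<longleftrightarrow> set xs \<subseteq> X \<and> length xs = n"

definition is_struc :: "('f, 'r) lang \<Rightarrow> ('a, 'f, 'r) struc \<Rightarrow> bool" where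
  "is_struc L M \<longleftrightarrow>
     (\<forall>f xs. if tup (fst L f) (univ M) xs then fint M f xs \<in> univ M
             else fint M f xs = undefined) \<and>
     (\<forall>r xs. rint M r xs \<longrightarrow> tup (snd L r) (univ M) xs)"

definition substruc :: "('f, 'r) lang \<Rightarrow> ('a, 'f, 'r) struc \<Rightarrow> ('a, 'f, 'r) struc \<Rightarrow> bool" where
  "substruc L M N \<longleftrightarrow> is_struc L M \<and> is_struc L N \<and> univ M \<subseteq> univ N \<and>
     (\<forall>f xs. tup (fst L f) (univ M) xs \<longrightarrow> fint M f xs = fint N f xs) \<and>
     (\<forall>r xs. tup (snd L r) (univ M) xs \<longrightarrow> rint M r xs = rint N r xs)"

definition iso :: "('f, 'r) lang \<Rightarrow> ('a \<Rightarrow> 'a) \<Rightarrow> ('a, 'f, 'r) struc \<Rightarrow> ('a, 'f, 'r) struc \<Rightarrow> bool" where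
  "iso L h M N \<longleftrightarrow> is_struc L M \<and> is_struc L N \<and> bij_betw h (univ M) (univ N) \<and>
     (\<forall>f xs. tup (fst L f) (univ M) xs \<longrightarrow> h (fint M f xs) = fint N f (map h xs)) \<and>
     (\<forall>r xs. tup (snd L r) (univ M) xs \<longrightarrow> rint N r (map h xs) = rint M r xs)"

definition restr :: "('f, 'r) lang \<Rightarrow> ('a, 'f, 'r) struc \<Rightarrow> 'a set \<Rightarrow> ('a, 'f, 'r) struc" where
  "restr L N X = \<lparr> univ = X,
     fint = (\<lambda>f xs. if tup (fst L f) X xs then fint N f xs else undefined),
     rint = (\<lambda>r xs. tup (snd L r) X xs \<and> rint N r xs) \<rparr>"

definition union_struc :: "('f, 'r) lang \<Rightarrow> ('a, 'f, 'r) struc set \<Rightarrow> ('a, 'f, 'r) struc" where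
  "union_struc L Ms = \<lparr> univ = \<Union>(univ ` Ms),
     fint = (\<lambda>f xs. if tup (fst L f) (\<Union>(univ ` Ms)) xs
                    then fint (SOME M. M \<in> Ms \<and> set xs \<subseteq> univ M) f xs else undefined),
     rint = (\<lambda>r xs. \<exists>M\<in>Ms. rint M r xs) \<rparr>"

definition wlt :: "'i rel \<Rightarrow> 'i \<Rightarrow> 'i \<Rightarrow> bool" where
  "wlt r j i \<longleftrightarrow> (j, i) \<in> r \<and> j \<noteq> i"

definition is_limit_pt :: "'i set \<Rightarrow> 'i rel \<Rightarrow> 'i \<Rightarrow> bool" where
  "is_limit_pt I r i \<longleftrightarrow> (\<exists>j\<in>I. wlt r j i) \<and> (\<forall>j\<in>I. wlt r j i \<longrightarrow> (\<exists>k\<in>I. wlt r j k \<and> wlt r k i))"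

definition is_succ :: "'i set \<Rightarrow> 'i rel \<Rightarrow> 'i \<Rightarrow> 'i \<Rightarrow> bool" where
  "is_succ I r i j \<longleftrightarrow> wlt r i j \<and> \<not> (\<exists>k\<in>I. wlt r i k \<and> wlt r k j)"

definition incr_cont_chain ::
  "('f, 'r) lang \<Rightarrow> (('a, 'f, 'r) struc \<Rightarrow> ('a, 'f, 'r) struc \<Rightarrow> bool)
   \<Rightarrow> 'i set \<Rightarrow> 'i rel \<Rightarrow> ('i \<Rightarrow> ('a, 'f, 'r) struc) \<Rightarrow> bool" where
  "incr_cont_chain L le I r M \<longleftrightarrow> well_order_on I r \<and> I \<noteq> {} \<and>
     (\<forall>i\<in>I. \<forall>j\<in>I. (i, j) \<in> r \<longrightarrow> le (M i) (M j)) \<and>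
     (\<forall>i\<in>I. is_limit_pt I r i \<longrightarrow> M i = union_struc L (M ` {j\<in>I. wlt r j i}))"

text \<open>Chains are indexed by well-orders on the (arbitrary) type 'i.\<close>
definition aec :: "'i itself \<Rightarrow> ('f, 'r) lang \<Rightarrow> ('a, 'f, 'r) struc set
    \<Rightarrow> (('a, 'f, 'r) struc \<Rightarrow> ('a, 'f, 'r) struc \<Rightarrow> bool) \<Rightarrow> bool" where
  "aec (_ :: 'i itself) L K le \<longleftrightarrow>
     (\<forall>M\<in>K. is_struc L M) \<and>
     (\<forall>M M' h. M \<in> K \<and> iso L h M M' \<longrightarrow> M' \<in> K) \<and>
     (\<forall>M N. le M N \<longrightarrow> M \<in> K \<and> N \<in> K \<and> substruc L M N) \<and>
     (\<forall>M\<in>K. le M M) \<and>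
     (\<forall>M N P. le M N \<and> le N P \<longrightarrow> le M P) \<and>
     (\<forall>M N. le M N \<and> le N M \<longrightarrow> M = N) \<and>
     (\<forall>M N N' h. le M N \<and> iso L h N N' \<longrightarrow> le (restr L N' (h ` univ M)) N') \<and>
     (\<exists>\<Lambda> :: ('f + 'r + 'a + nat) set. infinite \<Lambda> \<and> (UNIV :: ('f + 'r) set) \<lesssim> \<Lambda> \<and>
        (\<forall>N\<in>K. \<forall>A. A \<subseteq> univ N \<longrightarrow>
           (\<exists>M. le M N \<and> A \<subseteq> univ M \<and> univ M \<lesssim> (A <+> \<Lambda>)))) \<and>
     (\<forall>(I :: 'i set) r M. incr_cont_chain L le I r M \<longrightarrow>
        union_struc L (M ` I) \<in> K \<and> (\<forall>i\<in>I. le (M i) (union_struc L (M ` I))) \<and>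
        (\<forall>N. (\<forall>i\<in>I. le (M i) N) \<longrightarrow> le (union_struc L (M ` I)) N)) \<and>
     (\<forall>M1 M2 N. le M1 N \<and> le M2 N \<and> univ M1 \<subseteq> univ M2 \<longrightarrow> le M1 M2)"

definition kemb :: "('f, 'r) lang \<Rightarrow> ('a, 'f, 'r) struc set
    \<Rightarrow> (('a, 'f, 'r) struc \<Rightarrow> ('a, 'f, 'r) struc \<Rightarrow> bool)
    \<Rightarrow> ('a \<Rightarrow> 'a) \<Rightarrow> ('a, 'f, 'r) struc \<Rightarrow> ('a, 'f, 'r) struc \<Rightarrow> bool" where
  "kemb L K le g M N \<longleftrightarrow> M \<in> K \<and> N \<in> K \<and> inj_on g (univ M) \<and>
     le (restr L N (g ` univ M)) N \<and> iso L g M (restr L N (g ` univ M))"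

definition pregeom_system :: "('f, 'r) lang \<Rightarrow> ('a, 'f, 'r) struc set
    \<Rightarrow> (('a, 'f, 'r) struc \<Rightarrow> ('a, 'f, 'r) struc \<Rightarrow> bool)
    \<Rightarrow> (('a, 'f, 'r) struc \<Rightarrow> 'a set \<Rightarrow> 'a set) \<Rightarrow> bool" where
  "pregeom_system L K le cl \<longleftrightarrow>
     (\<forall>M\<in>K.
        (\<forall>X. X \<subseteq> univ M \<longrightarrow> X \<subseteq> cl M X \<and> cl M X \<subseteq> univ M \<and> cl M (cl M X) = cl M X) \<and>
        (\<forall>X Y. X \<subseteq> Y \<and> Y \<subseteq> univ M \<longrightarrow> cl M X \<subseteq> cl M Y) \<and>
        (\<forall>X a. X \<subseteq> univ M \<and> a \<in> cl M X \<longrightarrow> (\<exists>X0. X0 \<subseteq> X \<and> finite X0 \<and> a \<in> cl M X0)) \<and>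
        (\<forall>A a b. A \<subseteq> univ M \<and> a \<in> univ M \<and> b \<in> cl M (insert a A) - cl M A
                 \<longrightarrow> a \<in> cl M (insert b A))) \<and>
     (\<forall>M N. le M N \<longrightarrow> (\<forall>X. X \<subseteq> univ M \<longrightarrow> cl M X = cl N X)) \<and>
     (\<forall>N\<in>K. \<forall>B. B \<subseteq> univ N \<and> cl N B = B \<and> (\<exists>M0. le M0 N \<and> univ M0 \<subseteq> B)
                 \<longrightarrow> (\<exists>M. le M N \<and> univ M = B))"

definition indep :: "(('a, 'f, 'r) struc \<Rightarrow> 'a set \<Rightarrow> 'a set) \<Rightarrow> ('a, 'f, 'r) struc \<Rightarrow> 'a set \<Rightarrow> bool" where
  "indep cl N B \<longleftrightarrow> (\<forall>b\<in>B. b \<notin> cl N (B - {b}))"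

definition pg_amalgam :: "(('a, 'f, 'r) struc \<Rightarrow> ('a, 'f, 'r) struc \<Rightarrow> bool)
    \<Rightarrow> (('a, 'f, 'r) struc \<Rightarrow> 'a set \<Rightarrow> 'a set)
    \<Rightarrow> ('a, 'f, 'r) struc \<Rightarrow> ('a, 'f, 'r) struc \<Rightarrow> ('a, 'f, 'r) struc \<Rightarrow> ('a, 'f, 'r) struc \<Rightarrow> bool" where
  "pg_amalgam le cl M0 M1 M2 N \<longleftrightarrow> le M0 M1 \<and> le M0 M2 \<and> le M1 N \<and> le M2 N \<and>
     (\<exists>B1 B2. B1 \<subseteq> univ N \<and> B2 \<subseteq> univ N \<and> indep cl N (B1 \<union> B2) \<and>
        cl N (B1 \<union> B2) = univ N \<and> cl N B1 = univ M1 \<and> cl N B2 = univ M2 \<and>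
        cl N (B1 \<inter> B2) = univ M0)"

definition comm_square :: "('f, 'r) lang \<Rightarrow> ('a, 'f, 'r) struc set
    \<Rightarrow> (('a, 'f, 'r) struc \<Rightarrow> ('a, 'f, 'r) struc \<Rightarrow> bool)
    \<Rightarrow> ('a, 'f, 'r) struc \<Rightarrow> ('a, 'f, 'r) struc \<Rightarrow> ('a, 'f, 'r) struc \<Rightarrow> ('a \<Rightarrow> 'a)
    \<Rightarrow> ('a, 'f, 'r) struc \<Rightarrow> ('a \<Rightarrow> 'a) \<Rightarrow> ('a \<Rightarrow> 'a) \<Rightarrow> bool" where
  "comm_square L K le M0 M1 M2 f N g1 g2 \<longleftrightarrow> le M0 M1 \<and> kemb L K le f M0 M2 \<and>
     kemb L K le g1 M1 N \<and> kemb L K le g2 M2 N \<and> (\<forall>x\<in>univ M0. g2 (f x) = g1 x)"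

definition pg_A :: "('f, 'r) lang \<Rightarrow> ('a, 'f, 'r) struc set
    \<Rightarrow> (('a, 'f, 'r) struc \<Rightarrow> ('a, 'f, 'r) struc \<Rightarrow> bool)
    \<Rightarrow> (('a, 'f, 'r) struc \<Rightarrow> 'a set \<Rightarrow> 'a set)
    \<Rightarrow> ('a, 'f, 'r) struc \<Rightarrow> ('a, 'f, 'r) struc \<Rightarrow> ('a, 'f, 'r) struc \<Rightarrow> ('a \<Rightarrow> 'a)
    \<Rightarrow> ('a, 'f, 'r) struc \<Rightarrow> ('a \<Rightarrow> 'a) \<Rightarrow> ('a \<Rightarrow> 'a) \<Rightarrow> bool" where
  "pg_A L K le cl M0 M1 M2 f N g1 g2 \<longleftrightarrow> comm_square L K le M0 M1 M2 f N g1 g2 \<and>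
     pg_amalgam le cl (restr L N (g1 ` univ M0)) (restr L N (g1 ` univ M1))
                      (restr L N (g2 ` univ M2)) N"

text \<open>A M0 M1 M2 f N g1 g2 means (N, g1, g2) \<in> A(M0, M1, M2, f); inclusions are id.\<close>

type_synonym ('a, 'f, 'r) amalg_class =
  "('a, 'f, 'r) struc \<Rightarrow> ('a, 'f, 'r) struc \<Rightarrow> ('a, 'f, 'r) struc \<Rightarrow> ('a \<Rightarrow> 'a)
   \<Rightarrow> ('a, 'f, 'r) struc \<Rightarrow> ('a \<Rightarrow> 'a) \<Rightarrow> ('a \<Rightarrow> 'a) \<Rightarrow> bool"

definition by_incl :: "('a, 'f, 'r) amalg_class \<Rightarrow> ('a, 'f, 'r) struc \<Rightarrow> ('a, 'f, 'r) struc
    \<Rightarrow> ('a, 'f, 'r) struc \<Rightarrow> ('a, 'f, 'r) struc \<Rightarrow> bool" where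
  "by_incl A M0 M1 M2 N \<longleftrightarrow> A M0 M1 M2 id N id id"

definition abs_minimal :: "(('a, 'f, 'r) struc \<Rightarrow> ('a, 'f, 'r) struc \<Rightarrow> bool)
    \<Rightarrow> ('a, 'f, 'r) amalg_class \<Rightarrow> bool" where
  "abs_minimal le A \<longleftrightarrow> (\<forall>M0 M1 M2 f N g1 g2 Ns N'.
     A M0 M1 M2 f N g1 g2 \<and> le N Ns \<and> le N' Ns \<and> g1 ` univ M1 \<union> g2 ` univ M2 \<subseteq> univ N'
     \<longrightarrow> le N N')"

definition regular :: "('f, 'r) lang \<Rightarrow> ('a, 'f, 'r) struc set
    \<Rightarrow> (('a, 'f, 'r) struc \<Rightarrow> ('a, 'f, 'r) struc \<Rightarrow> bool) \<Rightarrow> ('a, 'f, 'r) amalg_class \<Rightarrow> bool" where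
  "regular L K le A \<longleftrightarrow> (\<forall>M0 M1 M2 f N g1 g2. comm_square L K le M0 M1 M2 f N g1 g2 \<longrightarrow>
     (A M0 M1 M2 f N g1 g2 \<longleftrightarrow>
        (\<exists>M' N'. le M0 M' \<and> le M' M1 \<and> le (restr L N (g2 ` univ M2)) N' \<and> le N' N \<and>
           A M0 M' M2 f N' (restrict g1 (univ M')) g2 \<and>
           A M' M1 N' (restrict g1 (univ M')) N g1 id)) \<and>
     (A M0 M1 M2 f N g1 g2 \<longleftrightarrow>
        (\<forall>M'. le M0 M' \<and> le M' M1 \<longrightarrow>
           (\<exists>N'. le N' N \<and> A M0 M' M2 f N' (restrict g1 (univ M')) g2) \<and>
           (\<forall>N'. le N' N \<and> A M0 M' M2 f N' (restrict g1 (univ M')) g2 \<longrightarrow>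
                 A M' M1 N' (restrict g1 (univ M')) N g1 id))))"

definition union_fun :: "'i set \<Rightarrow> ('i \<Rightarrow> ('a, 'f, 'r) struc) \<Rightarrow> ('i \<Rightarrow> 'a \<Rightarrow> 'a) \<Rightarrow> 'a \<Rightarrow> 'a" where
  "union_fun I M f = (\<lambda>x. f (SOME i. i \<in> I \<and> x \<in> univ (M i)) x)"

definition continuous_amalg :: "'i itself \<Rightarrow> ('f, 'r) lang \<Rightarrow> ('a, 'f, 'r) struc set
    \<Rightarrow> (('a, 'f, 'r) struc \<Rightarrow> ('a, 'f, 'r) struc \<Rightarrow> bool) \<Rightarrow> ('a, 'f, 'r) amalg_class \<Rightarrow> bool" where
  "continuous_amalg (_ :: 'i itself) L K le A \<longleftrightarrow>
     (\<forall>(I :: 'i set) r M N f i0.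
        incr_cont_chain L le I r M \<and> incr_cont_chain L le I r N \<and>
        (\<forall>i\<in>I. \<exists>j\<in>I. wlt r i j) \<and>
        i0 \<in> I \<and> (\<forall>j\<in>I. (i0, j) \<in> r) \<and>
        (\<forall>i\<in>I. kemb L K le (f i) (M i) (N i)) \<and>
        (\<forall>i\<in>I. \<forall>j\<in>I. (i, j) \<in> r \<longrightarrow> (\<forall>x\<in>univ (M i). f j x = f i x)) \<and>
        (\<forall>i\<in>I. \<forall>j\<in>I. is_succ I r i j \<longrightarrow> A (M i) (M j) (N i) (f i) (N j) (f j) id)
        \<longrightarrow> A (M i0) (union_struc L (M ` I)) (N i0) (f i0) (union_struc L (N ` I)) (union_fun I M f) id)"

definition admits_decomp :: "(('a, 'f, 'r) struc \<Rightarrow> ('a, 'f, 'r) struc \<Rightarrow> bool)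
    \<Rightarrow> ('a, 'f, 'r) amalg_class \<Rightarrow> bool" where
  "admits_decomp le A \<longleftrightarrow> (\<forall>M0 M1 N. le M0 M1 \<and> le M1 N \<longrightarrow>
     (\<exists>M2. le M0 M2 \<and> le M2 N \<and> by_incl A M0 M1 M2 N))"

definition is_oplus :: "(('a, 'f, 'r) struc \<Rightarrow> ('a, 'f, 'r) struc \<Rightarrow> bool)
    \<Rightarrow> ('a, 'f, 'r) amalg_class \<Rightarrow> ('a, 'f, 'r) struc \<Rightarrow> ('a, 'f, 'r) struc
    \<Rightarrow> ('a, 'f, 'r) struc \<Rightarrow> ('a, 'f, 'r) struc \<Rightarrow> ('a, 'f, 'r) struc \<Rightarrow> bool" where
  "is_oplus le A M0 M1 M2 N X \<longleftrightarrow> le X N \<and> by_incl A M0 M1 M2 X \<and>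
     (\<forall>Y. le Y N \<and> by_incl A M0 M1 M2 Y \<longrightarrow> Y = X)"

definition three_monotonic :: "(('a, 'f, 'r) struc \<Rightarrow> ('a, 'f, 'r) struc \<Rightarrow> bool)
    \<Rightarrow> ('a, 'f, 'r) amalg_class \<Rightarrow> bool" where
  "three_monotonic le A \<longleftrightarrow> (\<forall>M0 M1 M2 M3 N N12.
     le M0 M1 \<and> le M0 M2 \<and> le M0 M3 \<and> le M1 N \<and> le M2 N \<and> le M3 N \<and>
     is_oplus le A M0 M1 M2 N N12 \<and> by_incl A M0 M3 N12 N
     \<longrightarrow> (\<exists>N13 N23. is_oplus le A M0 M1 M3 N N13 \<and> is_oplus le A M0 M2 M3 N N23 \<and>
                    by_incl A M3 N13 N23 N))"

text \<open>P i is the stage obtained after adding Mf i (N_{i+1} in the paper); the stage before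
  it (N_i in the paper) is the union of all earlier P j, which equals P j at successors
  and gives continuity at limits.\<close>
definition seq_amalg :: "('f, 'r) lang \<Rightarrow> (('a, 'f, 'r) struc \<Rightarrow> ('a, 'f, 'r) struc \<Rightarrow> bool)
    \<Rightarrow> ('a, 'f, 'r) amalg_class \<Rightarrow> 'i set \<Rightarrow> 'i rel \<Rightarrow> ('i \<Rightarrow> ('a, 'f, 'r) struc)
    \<Rightarrow> ('a, 'f, 'r) struc \<Rightarrow> ('a, 'f, 'r) struc \<Rightarrow> bool" where
  "seq_amalg L le A I r Mf Mb N \<longleftrightarrow> well_order_on I r \<and> le Mb N \<and>
     (\<exists>P. (\<forall>i\<in>I. le Mb (P i)) \<and>
          (\<forall>i\<in>I. \<forall>j\<in>I. (j, i) \<in> r \<longrightarrow> le (P j) (P i)) \<and>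
          (\<forall>i\<in>I. (\<forall>j\<in>I. (i, j) \<in> r) \<longrightarrow> P i = Mf i) \<and>
          (\<forall>i\<in>I. \<not> (\<forall>j\<in>I. (i, j) \<in> r) \<longrightarrow>
             (\<forall>j\<in>I. wlt r j i \<longrightarrow> le (P j) (union_struc L (P ` {k\<in>I. wlt r k i}))) \<and>
             le (union_struc L (P ` {k\<in>I. wlt r k i})) (P i) \<and>
             by_incl A Mb (union_struc L (P ` {k\<in>I. wlt r k i})) (Mf i) (P i)) \<and>
          N = union_struc L (insert Mb (P ` I)))"

text \<open>mu(K) = aleph_0: every element of a sequential amalgam already lies in the
  subamalgam of finitely many of the pieces (cardinals mu range over infinite cardinals,
  so aleph_0 is the least possible value).\<close>
definition mu_is_aleph0 :: "'i itself \<Rightarrow> ('f, 'r) lang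
    \<Rightarrow> (('a, 'f, 'r) struc \<Rightarrow> ('a, 'f, 'r) struc \<Rightarrow> bool) \<Rightarrow> ('a, 'f, 'r) amalg_class \<Rightarrow> bool" where
  "mu_is_aleph0 (_ :: 'i itself) L le A \<longleftrightarrow>
     (\<forall>(I :: 'i set) r Mf Mb N a. seq_amalg L le A I r Mf Mb N \<and> a \<in> univ N \<longrightarrow>
        (\<exists>S. S \<subseteq> I \<and> finite S \<and>
           (\<exists>N'. le N' N \<and> seq_amalg L le A S (Restr r S) Mf Mb N' \<and> a \<in> univ N')))"

end

theory Submission
  imports Defs
begin

(* Everything is computed in the pregeometry of one large model.  Call closed sets s1, s2 free
   over a closed s0 (contained in both) when s2 is generated over s0 by a set that stays
   independent over s1.  Choosing bases stage by stage shows that N is an A-amalgam of M1 and M2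
   over M0 by inclusion iff cl_N (M1 u M2) = N and M1, M2 are free over M0, and both conditions
   may be evaluated in any model above N.  Freeness is symmetric, monotone and transitive, which
   gives regularity and 3-monotonicity; extending a basis gives decompositions, and minimality
   is the minimality of the closure.  By finite character of the closure freeness survives
   unions of chains, which gives continuity.  Finally, by induction along the index order every
   element of a sequential amalgam lies in the closure of Mb and finitely many pieces Mf i, and
   for finite S these closures, taken along S, form a sequential subamalgam: so mu(K) = aleph_0. *)

section \<open>Independence in a pregeometry\<close>

definition indep_over :: "('a set \<Rightarrow> 'a set) \<Rightarrow> 'a set \<Rightarrow> 'a set \<Rightarrow> bool" where
  "indep_over c A X \<longleftrightarrow> (\<forall>x\<in>X. x \<notin> c (A \<union> (X - {x})))"

text \<open>This is the pregeometric meaning of "\<open>s1\<close> and \<open>s2\<close> are independent over \<open>s0\<close>".\<close>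
definition free_over :: "('a set \<Rightarrow> 'a set) \<Rightarrow> 'a set \<Rightarrow> 'a set \<Rightarrow> 'a set \<Rightarrow> bool" where
  "free_over c s0 s1 s2 \<longleftrightarrow> (\<exists>Y\<subseteq>s2. indep_over c s1 Y \<and> c (s0 \<union> Y) = s2)"

definition basis_amalgam :: "('a set \<Rightarrow> 'a set) \<Rightarrow> 'a set \<Rightarrow> 'a set \<Rightarrow> 'a set \<Rightarrow> 'a set \<Rightarrow> bool" where
  "basis_amalgam c U m0 m1 m2 \<longleftrightarrow> (\<exists>B1 B2. B1 \<subseteq> U \<and> B2 \<subseteq> U \<and> indep_over c {} (B1 \<union> B2) \<and>
     c (B1 \<union> B2) = U \<and> c B1 = m1 \<and> c B2 = m2 \<and> c (B1 \<inter> B2) = m0)"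

lemma finite_subset_UN_chain:
  assumes "J \<noteq> {}" "\<And>k l. k \<in> J \<Longrightarrow> l \<in> J \<Longrightarrow> A k \<subseteq> A l \<or> A l \<subseteq> A k"
    and "finite F" "F \<subseteq> (\<Union>k\<in>J. A k)"
  shows "\<exists>k\<in>J. F \<subseteq> A k"
proof -
  have "subset.chain UNIV (A ` J)"
    using assms(2) unfolding subset_chain_def by blast
  then obtain B where "B \<in> A ` J" "F \<subseteq> B"
    using finite_subset_Union_chain[of F "A ` J" UNIV] assms(1,3,4) by auto
  then show ?thesis by blast
qed

lemma free_over_cong:
  assumes "\<And>X. X \<subseteq> T \<Longrightarrow> c X = c' X" "s0 \<subseteq> T" "s1 \<subseteq> T" "s2 \<subseteq> T"
  shows "free_over c s0 s1 s2 \<longleftrightarrow> free_over c' s0 s1 s2"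
proof -
  have "\<And>Y. Y \<subseteq> s2 \<Longrightarrow> indep_over c s1 Y \<longleftrightarrow> indep_over c' s1 Y"
    unfolding indep_over_def using assms by (metis (no_types, lifting) Diff_subset le_sup_iff order_trans)
  moreover have "\<And>Y. Y \<subseteq> s2 \<Longrightarrow> c (s0 \<union> Y) = c' (s0 \<union> Y)" using assms by auto
  ultimately show ?thesis unfolding free_over_def by (metis (no_types, lifting))
qed

locale pregeometry =
  fixes U :: "'a set" and c :: "'a set \<Rightarrow> 'a set"
  assumes incl: "X \<subseteq> U \<Longrightarrow> X \<subseteq> c X"
    and sub: "X \<subseteq> U \<Longrightarrow> c X \<subseteq> U"
    and idem: "X \<subseteq> U \<Longrightarrow> c (c X) = c X"
    and mono: "X \<subseteq> Y \<Longrightarrow> Y \<subseteq> U \<Longrightarrow> c X \<subseteq> c Y"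
    and fin: "X \<subseteq> U \<Longrightarrow> a \<in> c X \<Longrightarrow> \<exists>X0. X0 \<subseteq> X \<and> finite X0 \<and> a \<in> c X0"
    and exch: "A \<subseteq> U \<Longrightarrow> a \<in> U \<Longrightarrow> b \<in> c (insert a A) - c A \<Longrightarrow> a \<in> c (insert b A)"
begin

definition closed :: "'a set \<Rightarrow> bool" where
  "closed s \<longleftrightarrow> s \<subseteq> U \<and> c s = s"

lemma closedI: "s \<subseteq> U \<Longrightarrow> closed (c s)"
  unfolding closed_def using sub idem by blast

lemma closedD: "closed s \<Longrightarrow> s \<subseteq> U" "closed s \<Longrightarrow> c s = s"
  unfolding closed_def by blast+

lemma cl_least: "X \<subseteq> s \<Longrightarrow> closed s \<Longrightarrow> c X \<subseteq> s"
  unfolding closed_def using mono by blast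

lemma cl_Un_cl_left: "A \<subseteq> U \<Longrightarrow> B \<subseteq> U \<Longrightarrow> c (c A \<union> B) = c (A \<union> B)"
proof -
  assume a: "A \<subseteq> U" "B \<subseteq> U"
  have "c (A \<union> B) \<subseteq> c (c A \<union> B)"
    by (rule mono) (use a incl sub in blast)+
  moreover have "c A \<union> B \<subseteq> c (A \<union> B)"
    using mono[of A "A \<union> B"] incl[of "A \<union> B"] a by blast
  hence "c (c A \<union> B) \<subseteq> c (c (A \<union> B))" using mono a sub by (meson Un_subset_iff)
  ultimately show ?thesis using idem a by auto
qed

lemma cl_Un_cl_right: "A \<subseteq> U \<Longrightarrow> B \<subseteq> U \<Longrightarrow> c (A \<union> c B) = c (A \<union> B)"
  using cl_Un_cl_left[of B A] by (simp add: Un_commute)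

lemma indep_over_cl_iff: "A \<subseteq> U \<Longrightarrow> X \<subseteq> U \<Longrightarrow> indep_over c (c A) X \<longleftrightarrow> indep_over c A X"
  unfolding indep_over_def using cl_Un_cl_left[of A] by (metis Diff_subset order_trans)

lemma indep_over_antimono:
  assumes "A \<subseteq> A'" "A' \<subseteq> U" "X \<subseteq> U" "indep_over c A' X"
  shows "indep_over c A X"
  unfolding indep_over_def
proof
  fix x assume "x \<in> X"
  moreover have "c (A \<union> (X - {x})) \<subseteq> c (A' \<union> (X - {x}))" using assms by (intro mono) auto
  ultimately show "x \<notin> c (A \<union> (X - {x}))" using assms(4) unfolding indep_over_def by blast
qed

lemma indep_over_subset:
  assumes "X' \<subseteq> X" "A \<subseteq> U" "X \<subseteq> U" "indep_over c A X"
  shows "indep_over c A X'"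
  unfolding indep_over_def
proof
  fix x assume "x \<in> X'"
  moreover have "c (A \<union> (X' - {x})) \<subseteq> c (A \<union> (X - {x}))" using assms by (intro mono) auto
  ultimately show "x \<notin> c (A \<union> (X' - {x}))" using assms(1,4) unfolding indep_over_def by blast
qed

lemma indep_over_disjoint:
  assumes "indep_over c A X" "A \<subseteq> U" "X \<subseteq> U"
  shows "X \<inter> c A = {}"
proof -
  have "c A \<subseteq> c (A \<union> (X - {x}))" for x using assms by (intro mono) auto
  then show ?thesis using assms(1) unfolding indep_over_def by blast
qed

text \<open>If adding \<open>y \<in> Y0\<close> put \<open>x\<close> into the closure, exchange would put \<open>y\<close> into the closure
  of \<open>A \<union> X \<union> (Y - {y})\<close>.\<close>
lemma indep_over_Un_finite_extension:
  assumes A: "A \<subseteq> U" "X \<subseteq> U" "Y \<subseteq> U" "X \<inter> Y = {}" "indep_over c A X"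
    "indep_over c (A \<union> X) Y" "x \<in> X"
  shows "finite Y0 \<Longrightarrow> Y0 \<subseteq> Y \<Longrightarrow> x \<notin> c (A \<union> (X - {x}) \<union> Y0)"
proof (induction Y0 rule: finite_induct)
  case empty thus ?case using A unfolding indep_over_def by auto
next
  case (insert y Y0)
  let ?C = "A \<union> (X - {x}) \<union> Y0"
  have C: "?C \<subseteq> U" using A insert by auto
  have nx: "x \<notin> c ?C" using insert by auto
  show ?case
  proof
    assume "x \<in> c (A \<union> (X - {x}) \<union> insert y Y0)"
    hence "x \<in> c (insert y ?C) - c ?C" using nx by auto
    hence "y \<in> c (insert x ?C)" using exch[OF C] A insert by auto
    moreover have "insert x ?C \<subseteq> A \<union> X \<union> (Y - {y})" using A insert by auto
    hence "c (insert x ?C) \<subseteq> c (A \<union> X \<union> (Y - {y}))" using A by (intro mono) auto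
    ultimately show False using A(6) insert unfolding indep_over_def by blast
  qed
qed

lemma indep_over_Un_iff:
  assumes "A \<subseteq> U" "X \<subseteq> U" "Y \<subseteq> U" "X \<inter> Y = {}"
  shows "indep_over c A (X \<union> Y) \<longleftrightarrow> indep_over c A X \<and> indep_over c (A \<union> X) Y"
proof
  assume h: "indep_over c A (X \<union> Y)"
  have "indep_over c (A \<union> X) Y" unfolding indep_over_def
  proof
    fix y assume "y \<in> Y"
    hence "A \<union> X \<union> (Y - {y}) = A \<union> ((X \<union> Y) - {y})" using assms by auto
    thus "y \<notin> c (A \<union> X \<union> (Y - {y}))" using h \<open>y \<in> Y\<close> unfolding indep_over_def by auto
  qed
  then show "indep_over c A X \<and> indep_over c (A \<union> X) Y"
    using indep_over_subset[OF _ _ _ h] assms by auto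
next
  assume h: "indep_over c A X \<and> indep_over c (A \<union> X) Y"
  show "indep_over c A (X \<union> Y)" unfolding indep_over_def
  proof
    fix z assume z: "z \<in> X \<union> Y"
    show "z \<notin> c (A \<union> (X \<union> Y - {z}))"
    proof (cases "z \<in> Y")
      case True
      hence "A \<union> (X \<union> Y - {z}) = A \<union> X \<union> (Y - {z})" using assms by auto
      thus ?thesis using h True unfolding indep_over_def by auto
    next
      case False
      hence zX: "z \<in> X" using z by auto
      show ?thesis
      proof
        assume "z \<in> c (A \<union> (X \<union> Y - {z}))"
        then obtain Z where Z: "Z \<subseteq> A \<union> (X \<union> Y - {z})" "finite Z" "z \<in> c Z"
          using fin[of "A \<union> (X \<union> Y - {z})" z] assms by auto
        have "Z \<subseteq> A \<union> (X - {z}) \<union> (Z \<inter> Y)" using Z by auto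
        hence "c Z \<subseteq> c (A \<union> (X - {z}) \<union> (Z \<inter> Y))" using assms by (intro mono) auto
        moreover have "z \<notin> c (A \<union> (X - {z}) \<union> (Z \<inter> Y))"
          using indep_over_Un_finite_extension[OF assms _ _ zX, of "Z \<inter> Y"] h Z by auto
        ultimately show False using Z by auto
      qed
    qed
  qed
qed

lemma indep_over_finite_character:
  assumes "A \<subseteq> U" "X \<subseteq> U" "\<And>X0. X0 \<subseteq> X \<Longrightarrow> finite X0 \<Longrightarrow> indep_over c A X0"
  shows "indep_over c A X"
  unfolding indep_over_def
proof
  fix x assume x: "x \<in> X"
  show "x \<notin> c (A \<union> (X - {x}))"
  proof
    assume "x \<in> c (A \<union> (X - {x}))"
    then obtain Z where Z: "Z \<subseteq> A \<union> (X - {x})" "finite Z" "x \<in> c Z"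
      using fin[of "A \<union> (X - {x})" x] assms by auto
    let ?X0 = "insert x (Z \<inter> X)"
    have "indep_over c A ?X0" using assms(3) Z x by auto
    moreover have "c Z \<subseteq> c (A \<union> (?X0 - {x}))" using Z assms by (intro mono) auto
    ultimately show False using Z unfolding indep_over_def by auto
  qed
qed

lemma indep_over_Union_chain:
  assumes "A \<subseteq> U" "C \<noteq> {}" "subset.chain UNIV C" "\<And>X. X \<in> C \<Longrightarrow> X \<subseteq> U \<and> indep_over c A X"
  shows "indep_over c A (\<Union>C)"
proof (rule indep_over_finite_character)
  show "\<Union>C \<subseteq> U" using assms(4) by blast
  fix X0 assume "X0 \<subseteq> \<Union>C" "finite X0"
  then obtain X where "X \<in> C" "X0 \<subseteq> X"
    using finite_subset_Union_chain[of X0 C UNIV] assms(2,3) by blast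
  then show "indep_over c A X0" using indep_over_subset assms by blast
qed fact

lemma indep_basis_exists:
  assumes "A \<subseteq> U" "Y \<subseteq> U"
  shows "\<exists>X\<subseteq>Y. indep_over c A X \<and> Y \<subseteq> c (A \<union> X)"
proof -
  let ?F = "{X. X \<subseteq> Y \<and> indep_over c A X}"
  have "\<Union>C \<in> ?F" if "C \<noteq> {}" "subset.chain ?F C" for C
    using indep_over_Union_chain[OF assms(1) that(1)] that assms(2)
    unfolding subset_chain_def by (auto simp: subset.chain_def)
  moreover have "{} \<in> ?F" unfolding indep_over_def by simp
  ultimately obtain X where X: "X \<in> ?F" "\<forall>X'\<in>?F. X \<subseteq> X' \<longrightarrow> X' = X"
    using subset_Zorn_nonempty[of ?F] by blast
  have "y \<in> c (A \<union> X)" if y: "y \<in> Y" for y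
  proof (rule ccontr)
    assume ny: "y \<notin> c (A \<union> X)"
    have XU: "X \<subseteq> U" using X assms by auto
    have "y \<notin> X" using ny incl[of "A \<union> X"] XU assms by auto
    have "indep_over c (A \<union> X) {y}" using ny unfolding indep_over_def by auto
    hence "indep_over c A (X \<union> {y})" using indep_over_Un_iff[of A X "{y}"] X assms y \<open>y \<notin> X\<close> XU by auto
    hence "insert y X \<in> ?F" using X y by auto
    hence "insert y X = X" using X(2) by blast
    thus False using \<open>y \<notin> X\<close> by auto
  qed
  thus ?thesis using X by auto
qed

end

context pregeometry begin

lemma free_over_indepD:
  assumes "closed s0" "closed s1" "closed s2" "s0 \<subseteq> s1" "s0 \<subseteq> s2"
    and "free_over c s0 s1 s2" "X \<subseteq> s1" "indep_over c s0 X"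
  shows "indep_over c s2 X"
proof -
  obtain Z where Z: "Z \<subseteq> s2" "indep_over c s1 Z" "c (s0 \<union> Z) = s2"
    using assms(6) unfolding free_over_def by auto
  have U: "s0 \<subseteq> U" "s1 \<subseteq> U" "s2 \<subseteq> U" "X \<subseteq> U" "Z \<subseteq> U"
    using assms Z unfolding closed_def by auto
  have "indep_over c (s0 \<union> X) Z" using indep_over_antimono[OF _ _ _ Z(2)] assms U by auto
  moreover have "Z \<inter> s1 = {}" using indep_over_disjoint[OF Z(2)] U assms unfolding closed_def by auto
  hence d: "X \<inter> Z = {}" using assms by auto
  ultimately have "indep_over c s0 (Z \<union> X)"
    using indep_over_Un_iff[of s0 X Z] assms U by (auto simp: Un_commute)
  hence "indep_over c (s0 \<union> Z) X" using indep_over_Un_iff[of s0 Z X] U d by (auto simp: Int_commute)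
  hence "indep_over c (c (s0 \<union> Z)) X" using indep_over_cl_iff[of "s0 \<union> Z" X] U by auto
  thus ?thesis using Z by simp
qed

lemma free_overI:
  assumes "closed s0" "closed s2" "s0 \<subseteq> s2" "s1 \<subseteq> U"
    and "\<And>X. X \<subseteq> s2 \<Longrightarrow> indep_over c s0 X \<Longrightarrow> indep_over c s1 X"
  shows "free_over c s0 s1 s2"
proof -
  have U: "s0 \<subseteq> U" "s2 \<subseteq> U" using assms unfolding closed_def by auto
  obtain X where X: "X \<subseteq> s2" "indep_over c s0 X" "s2 \<subseteq> c (s0 \<union> X)"
    using indep_basis_exists[OF U] by auto
  have "c (s0 \<union> X) \<subseteq> s2" using cl_least[of "s0 \<union> X" s2] assms X by auto
  thus ?thesis unfolding free_over_def using X assms by (intro exI[of _ X]) auto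
qed

lemma free_over_sym:
  assumes "closed s0" "closed s1" "closed s2" "s0 \<subseteq> s1" "s0 \<subseteq> s2" "free_over c s0 s1 s2"
  shows "free_over c s0 s2 s1"
  using free_overI[of s0 s1 s2] free_over_indepD[OF assms] assms unfolding closed_def by auto

lemma free_over_antimono:
  assumes "free_over c s0 s1 s2" "s1' \<subseteq> s1" "s1 \<subseteq> U" "s2 \<subseteq> U"
  shows "free_over c s0 s1' s2"
  using assms indep_over_antimono unfolding free_over_def by (smt (verit, best) order_trans)

lemma free_over_refl: "closed s0 \<Longrightarrow> closed s2 \<Longrightarrow> s0 \<subseteq> s2 \<Longrightarrow> free_over c s0 s0 s2"
  using free_overI[of s0 s2 s0] unfolding closed_def by auto

lemma free_over_trans:
  assumes cl: "closed a0" "closed a'" "closed a1" "closed C" "closed n'"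
    and sub: "a0 \<subseteq> a'" "a' \<subseteq> a1" "a0 \<subseteq> C"
    and h1: "c (a' \<union> C) = n'" "free_over c a0 a' C"
    and h2: "c (a1 \<union> n') = n" "free_over c a' a1 n'"
  shows "c (a1 \<union> C) = n \<and> free_over c a0 a1 C"
proof -
  have U: "a0 \<subseteq> U" "a' \<subseteq> U" "a1 \<subseteq> U" "C \<subseteq> U" using cl unfolding closed_def by auto
  have a'n': "C \<subseteq> n'" "a' \<subseteq> n'" using h1 incl[of "a' \<union> C"] U by auto
  have "a1 \<union> C = a1 \<union> (a' \<union> C)" using sub by auto
  hence e: "c (a1 \<union> C) = n" using h2 h1 cl_Un_cl_right[of a1 "a' \<union> C"] U by auto
  obtain Y where Y: "Y \<subseteq> C" "indep_over c a' Y" "c (a0 \<union> Y) = C"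
    using h1 unfolding free_over_def by auto
  have "free_over c a' n' a1" using free_over_sym[OF cl(2,3,5) sub(2) a'n'(2) h2(2)] .
  hence "indep_over c a1 Y" using free_over_indepD[OF cl(2,5,3) a'n'(2) sub(2)] Y a'n' by auto
  thus ?thesis using e Y unfolding free_over_def by auto
qed

text \<open>The converse of transitivity: a free extension over \<open>a0\<close> stays free over any intermediate
  \<open>a'\<close>, once \<open>C\<close> is replaced by its closure together with \<open>a'\<close>.\<close>
lemma free_over_lift_base:
  assumes cl: "closed a0" "closed a'" "closed a1" "closed C"
    and sb: "a0 \<subseteq> a'" "a' \<subseteq> a1" "a0 \<subseteq> C"
    and h: "c (a1 \<union> C) = n" "free_over c a0 a1 C" "c (a' \<union> C) = n'"
  shows "c (a1 \<union> n') = n \<and> free_over c a' a1 n'"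
proof -
  have U: "a0 \<subseteq> U" "a' \<subseteq> U" "a1 \<subseteq> U" "C \<subseteq> U" using cl closedD(1) by auto
  have "a1 \<union> C = a1 \<union> (a' \<union> C)" using sb by blast
  hence e: "c (a1 \<union> n') = n" using cl_Un_cl_right[of a1 "a' \<union> C"] h U by simp
  obtain Y where Y: "Y \<subseteq> C" "indep_over c a1 Y" "c (a0 \<union> Y) = C"
    using h(2) unfolding free_over_def by blast
  have "a' \<union> Y = a' \<union> (a0 \<union> Y)" using sb by blast
  hence "c (a' \<union> Y) = n'" using cl_Un_cl_right[of a' "a0 \<union> Y"] h U Y by simp
  moreover have "Y \<subseteq> n'" using Y(1) incl[of "a' \<union> C"] h(3) U by blast
  ultimately show ?thesis using e Y unfolding free_over_def by blast
qed

lemma free_complement_exists: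
  assumes "closed m0" "closed m1" "m0 \<subseteq> m1"
  shows "\<exists>m2. closed m2 \<and> m0 \<subseteq> m2 \<and> c (m1 \<union> m2) = U \<and> free_over c m0 m1 m2"
proof -
  have U: "m0 \<subseteq> U" "m1 \<subseteq> U" using assms closedD(1) by auto
  obtain Y where Y: "Y \<subseteq> U" "indep_over c m1 Y" "U \<subseteq> c (m1 \<union> Y)"
    using indep_basis_exists[of m1 U] U by blast
  define m2 where "m2 = c (m0 \<union> Y)"
  have m2: "closed m2" "m0 \<subseteq> m2" "Y \<subseteq> m2"
    using closedI[of "m0 \<union> Y"] incl[of "m0 \<union> Y"] U Y unfolding m2_def by auto
  have "c (m1 \<union> Y) \<subseteq> c (m1 \<union> m2)" using mono[of "m1 \<union> Y" "m1 \<union> m2"] m2 U closedD(1) by blast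
  moreover have "c (m1 \<union> m2) \<subseteq> U" using sub[of "m1 \<union> m2"] U closedD(1)[OF m2(1)] by blast
  ultimately have "c (m1 \<union> m2) = U" using Y by blast
  moreover have "free_over c m0 m1 m2" unfolding free_over_def using Y m2 m2_def by blast
  ultimately show ?thesis using m2 by blast
qed

text \<open>By symmetry \<open>m3\<close> is free from \<open>c (m1 \<union> m2)\<close> over \<open>m0\<close>; then the free generators of \<open>m2\<close>
  over \<open>m0\<close> stay independent over \<open>c (m1 \<union> m3)\<close>.\<close>
lemma free_over_three_monotone:
  assumes cl: "closed m0" "closed m1" "closed m2" "closed m3"
    and sb: "m0 \<subseteq> m1" "m0 \<subseteq> m2" "m0 \<subseteq> m3"
    and h: "free_over c m0 m1 m2" "free_over c m0 m3 (c (m1 \<union> m2))"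
  shows "free_over c m0 m1 m3" "free_over c m0 m2 m3"
    "free_over c m3 (c (m1 \<union> m3)) (c (m2 \<union> m3))"
proof -
  have U: "m0 \<subseteq> U" "m1 \<subseteq> U" "m2 \<subseteq> U" "m3 \<subseteq> U" using closedD(1) cl by auto
  define n12 where "n12 = c (m1 \<union> m2)"
  have cn: "closed n12" "m1 \<subseteq> n12" "m2 \<subseteq> n12" "m0 \<subseteq> n12"
    using closedI[of "m1 \<union> m2"] incl[of "m1 \<union> m2"] U sb unfolding n12_def by auto
  have n12U: "n12 \<subseteq> U" using closedD(1)[OF cn(1)] .
  have s: "free_over c m0 n12 m3"
    using free_over_sym[OF cl(1) cl(4) cn(1) sb(3) cn(4)] h(2) unfolding n12_def by blast
  show "free_over c m0 m1 m3" using free_over_antimono[OF s cn(2) n12U U(4)] .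
  show "free_over c m0 m2 m3" using free_over_antimono[OF s cn(3) n12U U(4)] .
  obtain Z where Z: "Z \<subseteq> m2" "indep_over c m1 Z" "c (m0 \<union> Z) = m2"
    using h(1) unfolding free_over_def by blast
  obtain W where W: "W \<subseteq> m3" "indep_over c n12 W" "c (m0 \<union> W) = m3"
    using s unfolding free_over_def by blast
  have ZW: "Z \<subseteq> U" "W \<subseteq> U" using Z W U by blast+
  have "m1 \<union> Z \<subseteq> n12" using cn Z(1) by blast
  hence "indep_over c (m1 \<union> Z) W" using indep_over_antimono[OF _ n12U ZW(2) W(2)] by blast
  moreover have "W \<inter> c n12 = {}" using indep_over_disjoint[OF W(2) n12U ZW(2)] .
  hence d: "Z \<inter> W = {}" using closedD(2)[OF cn(1)] cn Z(1) by blast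
  ultimately have "indep_over c m1 (W \<union> Z)"
    using indep_over_Un_iff[of m1 Z W] Z(2) U ZW by (auto simp: Un_commute)
  hence "indep_over c (m1 \<union> W) Z" using indep_over_Un_iff[of m1 W Z] U ZW d by blast
  hence "indep_over c (c (m1 \<union> W)) Z" using indep_over_cl_iff[of "m1 \<union> W" Z] U ZW by blast
  moreover have "m1 \<union> W = m1 \<union> (m0 \<union> W)" using sb by blast
  hence "c (m1 \<union> W) = c (m1 \<union> m3)" using cl_Un_cl_right[of m1 "m0 \<union> W"] U ZW W(3) by simp
  ultimately have "indep_over c (c (m1 \<union> m3)) Z" by simp
  moreover have "m3 \<union> Z = m3 \<union> (m0 \<union> Z)" using sb by blast
  hence "c (m3 \<union> Z) = c (m2 \<union> m3)"
    using cl_Un_cl_right[of m3 "m0 \<union> Z"] U ZW Z(3) by (simp add: Un_commute)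
  moreover have "Z \<subseteq> c (m2 \<union> m3)" using Z(1) incl[of "m2 \<union> m3"] U by blast
  ultimately show "free_over c m3 (c (m1 \<union> m3)) (c (m2 \<union> m3))"
    unfolding free_over_def by blast
qed

lemma cl_Un_cl_Un: "A \<subseteq> U \<Longrightarrow> B \<subseteq> U \<Longrightarrow> C \<subseteq> U \<Longrightarrow> c (c (A \<union> C) \<union> c (B \<union> C)) = c (C \<union> c (A \<union> B))"
proof -
  assume U: "A \<subseteq> U" "B \<subseteq> U" "C \<subseteq> U"
  have "c (c (A \<union> C) \<union> c (B \<union> C)) = c ((A \<union> C) \<union> (B \<union> C))"
    using cl_Un_cl_left[of "A \<union> C" "c (B \<union> C)"] cl_Un_cl_right[of "A \<union> C" "B \<union> C"] U sub[of "B \<union> C"]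
    by simp
  also have "(A \<union> C) \<union> (B \<union> C) = C \<union> (A \<union> B)" by blast
  finally show ?thesis using cl_Un_cl_right[of C "A \<union> B"] U by simp
qed

lemma free_over_of_basis_amalgam:
  assumes "basis_amalgam c U m0 m1 m2"
  shows "c (m1 \<union> m2) = U \<and> free_over c m0 m1 m2"
proof -
  obtain B1 B2 where B: "B1 \<subseteq> U" "B2 \<subseteq> U" "indep_over c {} (B1 \<union> B2)"
      "c (B1 \<union> B2) = U" "c B1 = m1" "c B2 = m2" "c (B1 \<inter> B2) = m0"
    using assms unfolding basis_amalgam_def by blast
  define X2 where "X2 = B2 - B1"
  have X2U: "X2 \<subseteq> U" "B1 \<inter> X2 = {}" "B1 \<union> B2 = B1 \<union> X2" using B unfolding X2_def by auto
  have "indep_over c ({} \<union> B1) X2" using indep_over_Un_iff[of "{}" B1 X2] B(3) B(1) X2U by simp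
  hence i: "indep_over c m1 X2" using indep_over_cl_iff[of B1 X2] B(1,5) X2U by simp
  have s: "X2 \<subseteq> m2" using incl[OF B(2)] B(6) unfolding X2_def by blast
  have "(B1 \<inter> B2) \<union> X2 = B2" unfolding X2_def by blast
  hence e: "c (m0 \<union> X2) = m2" using cl_Un_cl_left[of "B1 \<inter> B2" X2] B(1,6,7) X2U by auto
  have "c (m1 \<union> m2) = c (B1 \<union> B2)"
    using cl_Un_cl_left[of B1 "c B2"] cl_Un_cl_right[of B1 B2] B(1,2,5,6) sub[of B2] by simp
  with i s e show ?thesis using B(4) unfolding free_over_def by blast
qed

text \<open>Bases are chosen in stages: a basis \<open>B0\<close> of \<open>m0\<close>, extended by a basis \<open>X1\<close> of \<open>m1\<close>
  over \<open>m0\<close> and by the free generators \<open>Y\<close> of \<open>m2\<close>.\<close>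
lemma basis_amalgam_of_free_over:
  assumes cm: "closed m0" "closed m1" "closed m2" "m0 \<subseteq> m1"
    and R: "c (m1 \<union> m2) = U" "free_over c m0 m1 m2"
  shows "basis_amalgam c U m0 m1 m2"
proof -
  have mU: "m0 \<subseteq> U" "m1 \<subseteq> U" "m2 \<subseteq> U" using cm closedD by auto
  obtain Y where Y: "Y \<subseteq> m2" "indep_over c m1 Y" "c (m0 \<union> Y) = m2"
    using R unfolding free_over_def by blast
  obtain B0 where B0: "B0 \<subseteq> m0" "indep_over c {} B0" "m0 \<subseteq> c ({} \<union> B0)"
    using indep_basis_exists[of "{}" m0] mU by blast
  have cB0: "c B0 = m0" using B0 cl_least[of B0 m0] cm by auto
  obtain X1 where X1: "X1 \<subseteq> m1" "indep_over c m0 X1" "m1 \<subseteq> c (m0 \<union> X1)"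
    using indep_basis_exists[of m0 m1] mU by blast
  have U: "B0 \<subseteq> U" "X1 \<subseteq> U" "Y \<subseteq> U" using B0 X1 Y mU by blast+
  have cB1: "c (B0 \<union> X1) = m1"
    using cl_least[of "m0 \<union> X1" m1] X1 cm cl_Un_cl_left[of B0 X1] cB0 U by auto
  have cB2: "c (B0 \<union> Y) = m2" using cl_Un_cl_left[of B0 Y] cB0 Y(3) U by simp
  have dX1: "X1 \<inter> m0 = {}" using indep_over_disjoint[OF X1(2)] mU U closedD(2)[OF cm(1)] by simp
  have dY: "Y \<inter> m1 = {}" using indep_over_disjoint[OF Y(2)] mU U closedD(2)[OF cm(2)] by simp
  have d1: "X1 \<inter> Y = {}" using dY X1(1) by blast
  have "indep_over c B0 X1" using indep_over_cl_iff[of B0 X1] cB0 X1(2) U by simp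
  moreover have "indep_over c (B0 \<union> X1) Y" using indep_over_cl_iff[of "B0 \<union> X1" Y] cB1 Y(2) U by simp
  ultimately have "indep_over c B0 (X1 \<union> Y)" using indep_over_Un_iff[of B0 X1 Y] U d1 by simp
  moreover have "B0 \<inter> (X1 \<union> Y) = {}" using dX1 dY B0(1) cm(4) by blast
  ultimately have i: "indep_over c {} (B0 \<union> (X1 \<union> Y))"
    using indep_over_Un_iff[of "{}" B0 "X1 \<union> Y"] B0(2) U by simp
  have "c ((B0 \<union> X1) \<union> (B0 \<union> Y)) = c (m1 \<union> m2)"
    using cl_Un_cl_left[of "B0 \<union> X1" "c (B0 \<union> Y)"] cl_Un_cl_right[of "B0 \<union> X1" "B0 \<union> Y"] U cB1 cB2
      sub[of "B0 \<union> Y"] by simp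
  hence e3: "c ((B0 \<union> X1) \<union> (B0 \<union> Y)) = U" using R by simp
  have e: "(B0 \<union> X1) \<union> (B0 \<union> Y) = B0 \<union> (X1 \<union> Y)" "(B0 \<union> X1) \<inter> (B0 \<union> Y) = B0" using d1 by blast+
  show ?thesis unfolding basis_amalgam_def
    by (rule exI[of _ "B0 \<union> X1"], rule exI[of _ "B0 \<union> Y"]) (use U i e e3 cB1 cB2 cB0 in simp)
qed

lemma basis_amalgam_iff_free_over:
  "closed m0 \<Longrightarrow> closed m1 \<Longrightarrow> closed m2 \<Longrightarrow> m0 \<subseteq> m1 \<Longrightarrow>
    basis_amalgam c U m0 m1 m2 \<longleftrightarrow> c (m1 \<union> m2) = U \<and> free_over c m0 m1 m2"
  using free_over_of_basis_amalgam basis_amalgam_of_free_over by blast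

lemma free_over_UN_chain:
  assumes J: "J \<noteq> {}" "\<And>k l. k \<in> J \<Longrightarrow> l \<in> J \<Longrightarrow> al k \<subseteq> al l \<or> al l \<subseteq> al k"
    and c: "closed a0" "closed c0" "a0 \<subseteq> c0"
    and k: "\<And>k. k \<in> J \<Longrightarrow> closed (al k) \<and> a0 \<subseteq> al k \<and> free_over c a0 (al k) c0"
  shows "free_over c a0 (\<Union>k\<in>J. al k) c0"
proof -
  let ?A = "\<Union>k\<in>J. al k"
  have c0U: "c0 \<subseteq> U" and a0U: "a0 \<subseteq> U" and AU: "?A \<subseteq> U" using closedD(1) c k by blast+
  have "indep_over c ?A X" if X: "X \<subseteq> c0" "indep_over c a0 X" for X
  proof (rule indep_over_finite_character[OF AU])
    show XU: "X \<subseteq> U" using X c0U by blast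
    fix X0 assume X0: "X0 \<subseteq> X" "finite X0"
    show "indep_over c ?A X0" unfolding indep_over_def
    proof (intro ballI notI)
      fix x assume x: "x \<in> X0" and xc: "x \<in> c (?A \<union> (X0 - {x}))"
      have "?A \<union> (X0 - {x}) \<subseteq> U" using AU X0(1) XU by blast
      then obtain Z where Z: "Z \<subseteq> ?A \<union> (X0 - {x})" "finite Z" "x \<in> c Z"
        using fin[OF _ xc] by blast
      have "finite (Z \<inter> ?A)" "Z \<inter> ?A \<subseteq> ?A" using Z(2) by auto
      then obtain k where kJ: "k \<in> J" "Z \<inter> ?A \<subseteq> al k"
        using finite_subset_UN_chain[OF J(1), of al "Z \<inter> ?A"] J(2) by blast
      have kk: "closed (al k)" "a0 \<subseteq> al k" "free_over c a0 (al k) c0" using k[OF kJ(1)] by blast+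
      have fs: "free_over c a0 c0 (al k)" using free_over_sym[OF c(1) kk(1) c(2) kk(2) c(3) kk(3)] .
      have X0c0: "X0 \<subseteq> c0" using X0(1) X(1) by blast
      have "indep_over c a0 X0" using indep_over_subset[OF X0(1) a0U XU X(2)] .
      hence "indep_over c (al k) X0" using free_over_indepD[OF c(1,2) kk(1) c(3) kk(2) fs X0c0] by blast
      moreover have "Z \<subseteq> al k \<union> (X0 - {x})" using Z(1) kJ(2) by blast
      moreover have "al k \<union> (X0 - {x}) \<subseteq> U" using closedD(1)[OF kk(1)] X0c0 c0U by blast
      ultimately have "x \<notin> c Z" using x mono[of Z "al k \<union> (X0 - {x})"] unfolding indep_over_def by blast
      then show False using Z(3) by blast
    qed
  qed
  then show "free_over c a0 ?A c0" by (rule free_overI[OF c(1,2,3) AU])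
qed

lemma cl_UN_Un:
  assumes "J \<noteq> {}" "\<And>k. k \<in> J \<Longrightarrow> al k \<subseteq> U \<and> c (al k \<union> c0) = nu k"
    and "c0 \<subseteq> U" "closed (\<Union>k\<in>J. nu k)"
  shows "c ((\<Union>k\<in>J. al k) \<union> c0) = (\<Union>k\<in>J. nu k)"
proof -
  let ?A = "\<Union>k\<in>J. al k" and ?V = "\<Union>k\<in>J. nu k"
  have AU: "?A \<subseteq> U" using assms(2) by blast
  have "al k \<union> c0 \<subseteq> nu k" if "k \<in> J" for k
    using incl[of "al k \<union> c0"] assms(2)[OF that] assms(3) by blast
  then have "c (?A \<union> c0) \<subseteq> ?V"
    using cl_least[OF _ assms(4), of "?A \<union> c0"] assms(1) by blast
  moreover have "nu k \<subseteq> c (?A \<union> c0)" if "k \<in> J" for k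
  proof -
    have "c (al k \<union> c0) \<subseteq> c (?A \<union> c0)" using mono[of "al k \<union> c0" "?A \<union> c0"] AU assms(3) that by blast
    then show ?thesis using assms(2)[OF that] by simp
  qed
  ultimately show ?thesis by blast
qed

end

section \<open>Structures, restrictions and unions\<close>

lemma tup_mono: "tup n X xs \<Longrightarrow> X \<subseteq> Y \<Longrightarrow> tup n Y xs"
  unfolding tup_def by auto

lemma tup_map: "tup n X xs \<Longrightarrow> tup n (h ` X) (map h xs)"
  unfolding tup_def by auto

lemma is_struc_fint_in: "is_struc L M \<Longrightarrow> tup (fst L f) (univ M) xs \<Longrightarrow> fint M f xs \<in> univ M"
  unfolding is_struc_def by metis

lemma is_struc_fint_out: "is_struc L M \<Longrightarrow> \<not> tup (fst L f) (univ M) xs \<Longrightarrow> fint M f xs = undefined"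
  unfolding is_struc_def by metis

lemma is_struc_rint: "is_struc L M \<Longrightarrow> rint M r xs \<Longrightarrow> tup (snd L r) (univ M) xs"
  unfolding is_struc_def by metis

lemma substruc_fint: "substruc L M N \<Longrightarrow> tup (fst L g) (univ M) xs \<Longrightarrow> fint M g xs = fint N g xs"
  unfolding substruc_def by blast

lemma substruc_rint: "substruc L M N \<Longrightarrow> tup (snd L r) (univ M) xs \<Longrightarrow> rint M r xs = rint N r xs"
  unfolding substruc_def by blast

lemma univ_restr [simp]: "univ (restr L N X) = X"
  unfolding restr_def by simp

lemma restr_fint: "tup (fst L g) X xs \<Longrightarrow> fint (restr L N X) g xs = fint N g xs"
  unfolding restr_def by simp

lemma restr_rint: "rint (restr L N X) r xs = (tup (snd L r) X xs \<and> rint N r xs)"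
  unfolding restr_def by simp

lemma restr_restr: "X \<subseteq> Y \<Longrightarrow> restr L (restr L N Y) X = restr L N X"
  unfolding restr_def using tup_mono by (fastforce intro!: ext)

lemma restr_univ_substruc: assumes "substruc L M N" shows "restr L N (univ M) = M"
proof -
  have s: "is_struc L M" and f: "\<And>f xs. tup (fst L f) (univ M) xs \<Longrightarrow> fint M f xs = fint N f xs"
    and r: "\<And>r xs. tup (snd L r) (univ M) xs \<Longrightarrow> rint M r xs = rint N r xs"
    using assms unfolding substruc_def by auto
  show ?thesis
  proof (rule struc.equality)
    show "fint (restr L N (univ M)) = fint M"
      using f is_struc_fint_out[OF s] unfolding restr_def by (auto intro!: ext)
    show "rint (restr L N (univ M)) = rint M"
      using r is_struc_rint[OF s] unfolding restr_def by (auto intro!: ext)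
  qed (auto simp: restr_def)
qed

lemma union_univ [simp]: "univ (union_struc L Ms) = \<Union>(univ ` Ms)"
  unfolding union_struc_def by simp

text \<open>For a directed family of substructures of \<open>Z\<close>, the choice made in \<open>union_struc\<close> is
  irrelevant: the union is the substructure of \<open>Z\<close> induced on the union of the universes.\<close>
lemma union_struc_eq_restr:
  assumes sub: "\<And>M. M \<in> Ms \<Longrightarrow> substruc L M Z"
    and dir: "\<And>F. finite F \<Longrightarrow> F \<subseteq> \<Union>(univ ` Ms) \<Longrightarrow> \<exists>M\<in>Ms. F \<subseteq> univ M"
  shows "union_struc L Ms = restr L Z (\<Union>(univ ` Ms))"
proof (rule struc.equality)
  let ?X = "\<Union>(univ ` Ms)"
  show "fint (union_struc L Ms) = fint (restr L Z ?X)"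
  proof (intro ext)
    fix g xs
    show "fint (union_struc L Ms) g xs = fint (restr L Z ?X) g xs"
    proof (cases "tup (fst L g) ?X xs")
      case True
      define M where "M = (SOME M. M \<in> Ms \<and> set xs \<subseteq> univ M)"
      have "\<exists>M. M \<in> Ms \<and> set xs \<subseteq> univ M" using dir[of "set xs"] True unfolding tup_def by auto
      then have M: "M \<in> Ms" "set xs \<subseteq> univ M" unfolding M_def by (metis (mono_tags, lifting) someI_ex)+
      have "tup (fst L g) (univ M) xs" using True M(2) unfolding tup_def by blast
      then have "fint M g xs = fint Z g xs" using substruc_fint[OF sub[OF M(1)]] by blast
      moreover have "fint (union_struc L Ms) g xs = fint M g xs"
        using True unfolding union_struc_def M_def by simp
      ultimately show ?thesis using restr_fint[OF True] by simp
    qed (simp add: union_struc_def restr_def)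
  qed
  show "rint (union_struc L Ms) = rint (restr L Z ?X)"
  proof (intro ext iffI)
    fix g xs
    assume "rint (union_struc L Ms) g xs"
    then obtain M where M: "M \<in> Ms" "rint M g xs" by (auto simp: union_struc_def)
    have "is_struc L M" using sub[OF M(1)] unfolding substruc_def by blast
    from is_struc_rint[OF this M(2)] have t: "tup (snd L g) (univ M) xs" .
    then have "rint Z g xs" using substruc_rint[OF sub[OF M(1)] t] M(2) by simp
    moreover have "tup (snd L g) ?X xs" using tup_mono[OF t] M(1) by blast
    ultimately show "rint (restr L Z ?X) g xs" by (simp add: restr_rint)
  next
    fix g xs
    assume r: "rint (restr L Z ?X) g xs"
    then have t: "tup (snd L g) ?X xs" "rint Z g xs" by (simp_all add: restr_rint)
    then obtain M where M: "M \<in> Ms" "set xs \<subseteq> univ M" using dir[of "set xs"] unfolding tup_def by auto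
    then have "tup (snd L g) (univ M) xs" using t unfolding tup_def by blast
    then have "rint M g xs" using substruc_rint[OF sub[OF M(1)]] t(2) by simp
    then show "rint (union_struc L Ms) g xs" using M(1) by (auto simp: union_struc_def)
  qed
qed (simp_all add: union_struc_def restr_def)

lemma union_struc_chain_eq_restr:
  assumes "Ms \<noteq> {}" "\<And>M M'. M \<in> Ms \<Longrightarrow> M' \<in> Ms \<Longrightarrow> univ M \<subseteq> univ M' \<or> univ M' \<subseteq> univ M"
    and "\<And>M. M \<in> Ms \<Longrightarrow> substruc L M Z"
  shows "union_struc L Ms = restr L Z (\<Union>(univ ` Ms))"
  using union_struc_eq_restr[OF assms(3)] finite_subset_UN_chain[of Ms univ] assms(1,2) by blast

lemma union_struc_greatest:
  assumes "X \<in> Ms" "\<And>M. M \<in> Ms \<Longrightarrow> substruc L M X"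
  shows "union_struc L Ms = X"
proof -
  have "\<Union>(univ ` Ms) = univ X" using assms unfolding substruc_def by blast
  then show ?thesis
    using union_struc_eq_restr[OF assms(2)] assms restr_univ_substruc by (metis subsetI)
qed

lemma isoD:
  assumes "iso L g M R"
  shows "is_struc L M" "is_struc L R" "bij_betw g (univ M) (univ R)"
    "\<And>f xs. tup (fst L f) (univ M) xs \<Longrightarrow> g (fint M f xs) = fint R f (map g xs)"
    "\<And>r xs. tup (snd L r) (univ M) xs \<Longrightarrow> rint R r (map g xs) = rint M r xs"
  using assms unfolding iso_def by blast+

lemma isoI:
  assumes "is_struc L M" "is_struc L R" "bij_betw g (univ M) (univ R)"
    "\<And>f xs. tup (fst L f) (univ M) xs \<Longrightarrow> g (fint M f xs) = fint R f (map g xs)"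
    "\<And>r xs. tup (snd L r) (univ M) xs \<Longrightarrow> rint R r (map g xs) = rint M r xs"
  shows "iso L g M R"
  using assms unfolding iso_def by blast

lemma iso_id_iff_eq: "iso L id M R \<longleftrightarrow> is_struc L M \<and> M = R"
proof
  assume h: "iso L id M R"
  have s: "is_struc L M" "is_struc L R" "univ M = univ R" using h unfolding iso_def bij_betw_def by auto
  have "substruc L M R" using h s unfolding iso_def substruc_def by auto
  then show "is_struc L M \<and> M = R" using restr_univ_substruc[of L M R] restr_univ_substruc[of L R R] s
    unfolding substruc_def by metis
qed (auto simp: iso_def bij_betw_def)

lemma map_cong_on: "\<forall>x\<in>A. g x = h x \<Longrightarrow> set xs \<subseteq> A \<Longrightarrow> map g xs = map h xs"
  by (induct xs) auto

lemma iso_cong: assumes "\<forall>x\<in>univ M. g x = h x" and "iso L g M R" shows "iso L h M R"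
proof (rule isoI)
  note m = map_cong_on[OF assms(1)]
  show "is_struc L M" "is_struc L R" using isoD[OF assms(2)] by blast+
  show "bij_betw h (univ M) (univ R)"
    using assms(1) isoD(3)[OF assms(2)] bij_betw_cong[of "univ M" g h "univ R"] by simp
  show "h (fint M f xs) = fint R f (map h xs)" if t: "tup (fst L f) (univ M) xs" for f xs
    using isoD(4)[OF assms(2) t] is_struc_fint_in[OF isoD(1)[OF assms(2)] t] assms(1) m t
    unfolding tup_def by auto
  show "rint R r (map h xs) = rint M r xs" if t: "tup (snd L r) (univ M) xs" for r xs
    using isoD(5)[OF assms(2) t] m t unfolding tup_def by auto
qed

lemma iso_restrict_substruc:
  assumes "iso L g M R" "substruc L M' M" "is_struc L (restr L R (g ` univ M'))"
  shows "iso L g M' (restr L R (g ` univ M'))"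
proof (rule isoI)
  have sM: "univ M' \<subseteq> univ M" and fM: "\<And>f xs. tup (fst L f) (univ M') xs \<Longrightarrow> fint M' f xs = fint M f xs"
    and rM: "\<And>r xs. tup (snd L r) (univ M') xs \<Longrightarrow> rint M' r xs = rint M r xs"
    using assms(2) unfolding substruc_def by auto
  show "is_struc L M'" using assms(2) unfolding substruc_def by blast
  show "is_struc L (restr L R (g ` univ M'))" by fact
  have "inj_on g (univ M)" using isoD(3)[OF assms(1)] unfolding bij_betw_def by blast
  thus "bij_betw g (univ M') (univ (restr L R (g ` univ M')))"
    using sM inj_on_subset unfolding bij_betw_def by auto
  show "g (fint M' f xs) = fint (restr L R (g ` univ M')) f (map g xs)"
    if t: "tup (fst L f) (univ M') xs" for f xs
    using fM[OF t] isoD(4)[OF assms(1) tup_mono[OF t sM]] by (simp add: restr_fint[OF tup_map[OF t]])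
  show "rint (restr L R (g ` univ M')) r (map g xs) = rint M' r xs"
    if t: "tup (snd L r) (univ M') xs" for r xs
    using rM[OF t] isoD(5)[OF assms(1) tup_mono[OF t sM]] by (simp add: restr_rint tup_map[OF t])
qed

section \<open>Well-ordered index sets\<close>

lemma well_order_on_total: "well_order_on I r \<Longrightarrow> i \<in> I \<Longrightarrow> j \<in> I \<Longrightarrow> (i, j) \<in> r \<or> (j, i) \<in> r"
  unfolding well_order_on_def linear_order_on_def partial_order_on_def preorder_on_def
    refl_on_def total_on_def by metis

lemma well_order_on_refl: "well_order_on I r \<Longrightarrow> i \<in> I \<Longrightarrow> (i, i) \<in> r"
  unfolding well_order_on_def linear_order_on_def partial_order_on_def preorder_on_def refl_on_def
  by blast

lemma well_order_on_trans: "well_order_on I r \<Longrightarrow> trans r"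
  unfolding well_order_on_def linear_order_on_def partial_order_on_def preorder_on_def by blast

lemma well_order_on_antisym: "well_order_on I r \<Longrightarrow> antisym r"
  unfolding well_order_on_def linear_order_on_def partial_order_on_def by blast

lemma well_order_on_not_least_iff:
  assumes "well_order_on I r" "i \<in> I"
  shows "\<not> (\<forall>j\<in>I. (i, j) \<in> r) \<longleftrightarrow> (\<exists>j\<in>I. wlt r j i)"
  using well_order_on_total[OF assms(1,2)] well_order_on_refl[OF assms] well_order_on_antisym[OF assms(1)]
  unfolding wlt_def antisym_def by blast

lemma well_order_on_induct:
  assumes wo: "well_order_on I r" and i0: "i0 \<in> I" "\<forall>j\<in>I. (i0, j) \<in> r"
    and base: "P i0"
    and succ: "\<And>i j. i \<in> I \<Longrightarrow> j \<in> I \<Longrightarrow> is_succ I r i j \<Longrightarrow> P i \<Longrightarrow> P j"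
    and lim: "\<And>j. j \<in> I \<Longrightarrow> is_limit_pt I r j \<Longrightarrow> (\<And>k. k \<in> I \<Longrightarrow> wlt r k j \<Longrightarrow> P k) \<Longrightarrow> P j"
    and j: "j \<in> I"
  shows "P j"
proof -
  have "wf (r - Id)" using wo unfolding well_order_on_def by blast
  then have "j \<in> I \<longrightarrow> P j"
  proof (induction j rule: wf_induct_rule)
    case (less j)
    show ?case
    proof
      assume jI: "j \<in> I"
      have IH: "\<And>k. k \<in> I \<Longrightarrow> wlt r k j \<Longrightarrow> P k" using less unfolding wlt_def by blast
      show "P j"
      proof (cases "j = i0 \<or> is_limit_pt I r j")
        case True then show ?thesis using base lim[OF jI _ IH] by blast
      next
        case False
        then have "wlt r i0 j" using i0 jI unfolding wlt_def by blast
        then obtain i where "i \<in> I" "wlt r i j" "\<not> (\<exists>k\<in>I. wlt r i k \<and> wlt r k j)"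
          using False i0 unfolding is_limit_pt_def by blast
        then show ?thesis using succ[OF \<open>i \<in> I\<close> jI] IH unfolding is_succ_def by blast
      qed
    qed
  qed
  then show ?thesis using j by blast
qed

lemma finite_total_has_greatest:
  assumes "finite S" "S \<noteq> {}" "\<And>i j. i \<in> S \<Longrightarrow> j \<in> S \<Longrightarrow> (i, j) \<in> r \<or> (j, i) \<in> r" "trans r"
  shows "\<exists>m\<in>S. \<forall>k\<in>S. (k, m) \<in> r"
  using assms
proof (induction S rule: finite_ne_induct)
  case (insert x F)
  then obtain m where m: "m \<in> F" "\<forall>k\<in>F. (k, m) \<in> r" by blast
  show ?case
  proof (cases "(m, x) \<in> r")
    case True
    then show ?thesis using m insert(5)[of x x] insert(6) unfolding trans_def by blast
  next
    case False
    then show ?thesis using insert(5)[of x m] m by blast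
  qed
qed blast

section \<open>The pregeometric amalgams of an AEC\<close>

locale aec_pregeom =
  fixes L :: "('f, 'r) lang" and K :: "('a, 'f, 'r) struc set"
    and le :: "('a, 'f, 'r) struc \<Rightarrow> ('a, 'f, 'r) struc \<Rightarrow> bool"
    and cl :: "('a, 'f, 'r) struc \<Rightarrow> 'a set \<Rightarrow> 'a set"
    and ity :: "'i itself"
  assumes aec: "aec ity L K le" and pgs: "pregeom_system L K le cl"
begin

lemma K_is_struc: "M \<in> K \<Longrightarrow> is_struc L M"
proof -
  have "\<forall>M\<in>K. is_struc L M" using aec unfolding aec_def by (elim conjE) assumption
  then show "M \<in> K \<Longrightarrow> is_struc L M" by blast
qed

lemma leD: "le M N \<Longrightarrow> M \<in> K \<and> N \<in> K \<and> substruc L M N"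
proof -
  have "\<forall>M N. le M N \<longrightarrow> M \<in> K \<and> N \<in> K \<and> substruc L M N"
    using aec unfolding aec_def by (elim conjE) assumption
  then show "le M N \<Longrightarrow> M \<in> K \<and> N \<in> K \<and> substruc L M N" by blast
qed

lemma le_refl: "M \<in> K \<Longrightarrow> le M M"
proof -
  have "\<forall>M\<in>K. le M M" using aec unfolding aec_def by (elim conjE) assumption
  then show "M \<in> K \<Longrightarrow> le M M" by blast
qed

lemma le_trans: "le M N \<Longrightarrow> le N P \<Longrightarrow> le M P"
proof -
  have "\<forall>M N P. le M N \<and> le N P \<longrightarrow> le M P" using aec unfolding aec_def by (elim conjE) assumption
  then show "le M N \<Longrightarrow> le N P \<Longrightarrow> le M P" by blast
qed

lemma le_iso_image: "le M N \<Longrightarrow> iso L h N N' \<Longrightarrow> le (restr L N' (h ` univ M)) N'"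
proof -
  have "\<forall>M N N' h. le M N \<and> iso L h N N' \<longrightarrow> le (restr L N' (h ` univ M)) N'"
    using aec unfolding aec_def by (elim conjE) assumption
  then show "le M N \<Longrightarrow> iso L h N N' \<Longrightarrow> le (restr L N' (h ` univ M)) N'" by blast
qed

lemma le_union_chain:
  assumes "incr_cont_chain L le (I :: 'i set) r M"
  shows "union_struc L (M ` I) \<in> K" "\<And>i. i \<in> I \<Longrightarrow> le (M i) (union_struc L (M ` I))"
proof -
  have "\<forall>(I :: 'i set) r M. incr_cont_chain L le I r M \<longrightarrow>
        union_struc L (M ` I) \<in> K \<and> (\<forall>i\<in>I. le (M i) (union_struc L (M ` I))) \<and>
        (\<forall>N. (\<forall>i\<in>I. le (M i) N) \<longrightarrow> le (union_struc L (M ` I)) N)"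
    using aec unfolding aec_def by (elim conjE) assumption
  then show "union_struc L (M ` I) \<in> K" "\<And>i. i \<in> I \<Longrightarrow> le (M i) (union_struc L (M ` I))"
    using assms by blast+
qed

lemma le_coherence: "le M1 N \<Longrightarrow> le M2 N \<Longrightarrow> univ M1 \<subseteq> univ M2 \<Longrightarrow> le M1 M2"
proof -
  have "\<forall>M1 M2 N. le M1 N \<and> le M2 N \<and> univ M1 \<subseteq> univ M2 \<longrightarrow> le M1 M2"
    using aec unfolding aec_def by (elim conjE) assumption
  then show "le M1 N \<Longrightarrow> le M2 N \<Longrightarrow> univ M1 \<subseteq> univ M2 \<Longrightarrow> le M1 M2" by blast
qed

lemma le_univ: "le M N \<Longrightarrow> univ M \<subseteq> univ N"
  using leD unfolding substruc_def by blast

lemma restr_univ_le: "le M N \<Longrightarrow> restr L N (univ M) = M"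
  using leD restr_univ_substruc by blast

lemma restr_le_eq: "le T N \<Longrightarrow> X \<subseteq> univ T \<Longrightarrow> restr L T X = restr L N X"
  using restr_univ_le[of T N] restr_restr[of X "univ T" L N] by simp

lemma pregeometry_cl: "M \<in> K \<Longrightarrow> pregeometry (univ M) (cl M)"
proof -
  assume "M \<in> K"
  have "\<forall>M\<in>K.
        (\<forall>X. X \<subseteq> univ M \<longrightarrow> X \<subseteq> cl M X \<and> cl M X \<subseteq> univ M \<and> cl M (cl M X) = cl M X) \<and>
        (\<forall>X Y. X \<subseteq> Y \<and> Y \<subseteq> univ M \<longrightarrow> cl M X \<subseteq> cl M Y) \<and>
        (\<forall>X a. X \<subseteq> univ M \<and> a \<in> cl M X \<longrightarrow> (\<exists>X0. X0 \<subseteq> X \<and> finite X0 \<and> a \<in> cl M X0)) \<and>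
        (\<forall>A a b. A \<subseteq> univ M \<and> a \<in> univ M \<and> b \<in> cl M (insert a A) - cl M A
                 \<longrightarrow> a \<in> cl M (insert b A))"
    using pgs unfolding pregeom_system_def by (elim conjE) assumption
  note h = bspec[OF this \<open>M \<in> K\<close>]
  note h1 = conjunct1[OF h] and h2 = conjunct1[OF conjunct2[OF h]]
    and h3 = conjunct1[OF conjunct2[OF conjunct2[OF h]]] and h4 = conjunct2[OF conjunct2[OF conjunct2[OF h]]]
  show ?thesis
  proof
    fix X assume "X \<subseteq> univ M"
    then show "X \<subseteq> cl M X" "cl M X \<subseteq> univ M" "cl M (cl M X) = cl M X" using h1 by blast+
  next
    fix X Y assume "X \<subseteq> Y" "Y \<subseteq> univ M" then show "cl M X \<subseteq> cl M Y" using h2 by blast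
  next
    fix X a assume "X \<subseteq> univ M" "a \<in> cl M X"
    then show "\<exists>X0. X0 \<subseteq> X \<and> finite X0 \<and> a \<in> cl M X0" using h3 by blast
  next
    fix A a b assume "A \<subseteq> univ M" "a \<in> univ M" "b \<in> cl M (insert a A) - cl M A"
    then show "a \<in> cl M (insert b A)" using h4 by blast
  qed
qed

lemma cl_le: "le M N \<Longrightarrow> X \<subseteq> univ M \<Longrightarrow> cl M X = cl N X"
proof -
  have "\<forall>M N. le M N \<longrightarrow> (\<forall>X. X \<subseteq> univ M \<longrightarrow> cl M X = cl N X)"
    using pgs unfolding pregeom_system_def by (elim conjE) assumption
  then show "le M N \<Longrightarrow> X \<subseteq> univ M \<Longrightarrow> cl M X = cl N X" by blast
qed

lemma closed_le: "le M N \<Longrightarrow> pregeometry.closed (univ N) (cl N) (univ M)"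
proof -
  assume h: "le M N"
  interpret M: pregeometry "univ M" "cl M" using pregeometry_cl leD[OF h] by blast
  interpret N: pregeometry "univ N" "cl N" using pregeometry_cl leD[OF h] by blast
  have "cl M (univ M) = univ M" using M.incl M.sub by blast
  then show ?thesis unfolding N.closed_def using cl_le[OF h] le_univ[OF h] by simp
qed

lemma cl_univ_le: "le M N \<Longrightarrow> cl N (univ M) = univ M"
proof -
  assume h: "le M N"
  interpret N: pregeometry "univ N" "cl N" using pregeometry_cl leD[OF h] by blast
  show ?thesis using N.closedD(2)[OF closed_le[OF h]] .
qed

lemma le_restr_closed:
  assumes "le M0 N" "pregeometry.closed (univ N) (cl N) B" "univ M0 \<subseteq> B"
  shows "le (restr L N B) N"
proof -
  have "N \<in> K" using leD assms(1) by blast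
  moreover have "B \<subseteq> univ N" "cl N B = B"
    using assms(2) pregeometry.closedD[OF pregeometry_cl[OF \<open>N \<in> K\<close>]] by blast+
  moreover have "\<forall>N\<in>K. \<forall>B. B \<subseteq> univ N \<and> cl N B = B \<and> (\<exists>M0. le M0 N \<and> univ M0 \<subseteq> B)
                 \<longrightarrow> (\<exists>M. le M N \<and> univ M = B)"
    using pgs unfolding pregeom_system_def by (elim conjE) assumption
  ultimately obtain M where "le M N" "univ M = B" using assms by blast
  then show ?thesis using restr_univ_le by metis
qed

lemma kemb_id_iff: "kemb L K le id M N \<longleftrightarrow> le M N"
proof
  assume "kemb L K le id M N"
  then show "le M N" unfolding kemb_def iso_id_iff_eq by auto
next
  assume "le M N"
  then show "kemb L K le id M N"
    using leD K_is_struc restr_univ_le unfolding kemb_def iso_id_iff_eq by auto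
qed

lemma comm_square_id_iff:
  "comm_square L K le M0 M1 M2 id N id id \<longleftrightarrow> le M0 M1 \<and> le M0 M2 \<and> le M1 N \<and> le M2 N"
  unfolding comm_square_def kemb_id_iff by auto

lemma by_incl_pg_A_iff: "by_incl (pg_A L K le cl) M0 M1 M2 N \<longleftrightarrow> pg_amalgam le cl M0 M1 M2 N"
proof -
  have "by_incl (pg_A L K le cl) M0 M1 M2 N \<longleftrightarrow> le M0 M1 \<and> le M0 M2 \<and> le M1 N \<and> le M2 N \<and>
      pg_amalgam le cl (restr L N (univ M0)) (restr L N (univ M1)) (restr L N (univ M2)) N"
    unfolding by_incl_def pg_A_def comm_square_id_iff by simp
  also have "\<dots> \<longleftrightarrow> pg_amalgam le cl M0 M1 M2 N"
  proof (cases "le M0 M1 \<and> le M0 M2 \<and> le M1 N \<and> le M2 N")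
    case True
    then have "restr L N (univ M0) = M0" "restr L N (univ M1) = M1" "restr L N (univ M2) = M2"
      using restr_univ_le le_trans by blast+
    then show ?thesis using True by simp
  qed (auto simp: pg_amalgam_def)
  finally show ?thesis .
qed

lemma pg_amalgam_iff_free:
  "pg_amalgam le cl M0 M1 M2 T \<longleftrightarrow> le M0 M1 \<and> le M0 M2 \<and> le M1 T \<and> le M2 T \<and>
     cl T (univ M1 \<union> univ M2) = univ T \<and> free_over (cl T) (univ M0) (univ M1) (univ M2)"
proof (cases "le M0 M1 \<and> le M0 M2 \<and> le M1 T \<and> le M2 T")
  case True
  then have l: "le M0 M1" "le M0 M2" "le M1 T" "le M2 T" "le M0 T" using le_trans by blast+
  interpret T: pregeometry "univ T" "cl T" using pregeometry_cl leD l by blast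
  have "T.closed (univ M0)" "T.closed (univ M1)" "T.closed (univ M2)"
    using closed_le l by blast+
  moreover have "univ M0 \<subseteq> univ M1" "univ M0 \<subseteq> univ M2" using le_univ l by blast+
  ultimately show ?thesis
    using T.basis_amalgam_iff_free_over l
    unfolding pg_amalgam_def basis_amalgam_def indep_def indep_over_def by simp
qed (auto simp: pg_amalgam_def)

lemma pg_amalgam_iff_free_in:
  assumes "le X N"
  shows "pg_amalgam le cl M0 M1 M2 X \<longleftrightarrow> le M0 M1 \<and> le M0 M2 \<and> le M1 X \<and> le M2 X \<and>
     cl N (univ M1 \<union> univ M2) = univ X \<and> free_over (cl N) (univ M0) (univ M1) (univ M2)"
proof (cases "le M0 M1 \<and> le M0 M2 \<and> le M1 X \<and> le M2 X")
  case True
  then have "univ M0 \<subseteq> univ X" "univ M1 \<subseteq> univ X" "univ M2 \<subseteq> univ X"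
    using le_univ le_trans by blast+
  then show ?thesis
    using pg_amalgam_iff_free free_over_cong[of "univ X" "cl X" "cl N"] cl_le[OF assms] by auto
qed (auto simp: pg_amalgam_def)

lemma abs_minimal_pg_A: "abs_minimal le (pg_A L K le cl)"
  unfolding abs_minimal_def
proof (intro allI impI, elim conjE)
  fix M0 M1 M2 f N g1 g2 Ns N'
  assume A: "pg_A L K le cl M0 M1 M2 f N g1 g2" and l: "le N Ns" "le N' Ns"
    and sub: "g1 ` univ M1 \<union> g2 ` univ M2 \<subseteq> univ N'"
  then have "pg_amalgam le cl (restr L N (g1 ` univ M0)) (restr L N (g1 ` univ M1))
      (restr L N (g2 ` univ M2)) N" unfolding pg_A_def by blast
  then have "le (restr L N (g1 ` univ M1)) N" "le (restr L N (g2 ` univ M2)) N"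
      "cl N (g1 ` univ M1 \<union> g2 ` univ M2) = univ N"
    unfolding pg_amalgam_iff_free by simp_all
  then have S: "g1 ` univ M1 \<union> g2 ` univ M2 \<subseteq> univ N" "cl N (g1 ` univ M1 \<union> g2 ` univ M2) = univ N"
    using le_univ by fastforce+
  interpret Ns: pregeometry "univ Ns" "cl Ns" using pregeometry_cl leD l by blast
  have "cl Ns (g1 ` univ M1 \<union> g2 ` univ M2) \<subseteq> univ N'"
    using Ns.cl_least[OF sub closed_le[OF l(2)]] .
  then have "univ N \<subseteq> univ N'" using S cl_le[OF l(1) S(1)] by simp
  then show "le N N'" using le_coherence l by blast
qed

lemma admits_decomp_pg_A: "admits_decomp le (pg_A L K le cl)"
  unfolding admits_decomp_def
proof (intro allI impI, elim conjE)
  fix M0 M1 N assume l: "le M0 M1" "le M1 N"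
  have l0: "le M0 N" using l le_trans by blast
  interpret N: pregeometry "univ N" "cl N" using pregeometry_cl leD l by blast
  obtain m2 where m2: "N.closed m2" "univ M0 \<subseteq> m2" "cl N (univ M1 \<union> m2) = univ N"
      "free_over (cl N) (univ M0) (univ M1) m2"
    using N.free_complement_exists[OF closed_le[OF l0] closed_le[OF l(2)] le_univ[OF l(1)]] by blast
  define M2 where "M2 = restr L N m2"
  have M2: "le M2 N" using le_restr_closed[OF l0 m2(1,2)] unfolding M2_def .
  have l02: "le M0 M2" using le_coherence[OF l0 M2] m2 unfolding M2_def by simp
  have "pg_amalgam le cl M0 M1 M2 N"
    using pg_amalgam_iff_free_in[OF le_refl] leD l l02 M2 m2 unfolding M2_def by auto
  then show "\<exists>M2. le M0 M2 \<and> le M2 N \<and> by_incl (pg_A L K le cl) M0 M1 M2 N"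
    using l02 M2 by_incl_pg_A_iff by blast
qed

lemma is_oplus_pg_A_iff:
  "is_oplus le (pg_A L K le cl) M0 M1 M2 N X \<longleftrightarrow> le X N \<and> pg_amalgam le cl M0 M1 M2 X"
proof -
  have "Y = X" if "le X N" "pg_amalgam le cl M0 M1 M2 X" "le Y N" "pg_amalgam le cl M0 M1 M2 Y" for Y
  proof -
    have "univ Y = univ X" using that pg_amalgam_iff_free_in by metis
    then show "Y = X" using restr_univ_le that by metis
  qed
  then show ?thesis unfolding is_oplus_def by_incl_pg_A_iff by blast
qed

lemma le_restr_cl_Un:
  assumes "le M0 M1" "le M1 N" "le M2 N"
  shows "le (restr L N (cl N (univ M1 \<union> univ M2))) N"
    and "le M1 (restr L N (cl N (univ M1 \<union> univ M2)))" "le M2 (restr L N (cl N (univ M1 \<union> univ M2)))"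
proof -
  interpret N: pregeometry "univ N" "cl N" using pregeometry_cl leD assms by blast
  have U: "univ M1 \<union> univ M2 \<subseteq> univ N" using le_univ assms by blast
  show L: "le (restr L N (cl N (univ M1 \<union> univ M2))) N"
    using le_restr_closed[OF le_trans[OF assms(1,2)] N.closedI[OF U]] N.incl[OF U] le_univ[OF assms(1)]
    by blast
  show "le M1 (restr L N (cl N (univ M1 \<union> univ M2)))" "le M2 (restr L N (cl N (univ M1 \<union> univ M2)))"
    using le_coherence[OF _ L] assms N.incl[OF U] by auto
qed

lemma three_monotonic_pg_A: "three_monotonic le (pg_A L K le cl)"
  unfolding three_monotonic_def
proof (intro allI impI, elim conjE)
  fix M0 M1 M2 M3 N N12
  assume l: "le M0 M1" "le M0 M2" "le M0 M3" "le M1 N" "le M2 N" "le M3 N"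
    and o: "is_oplus le (pg_A L K le cl) M0 M1 M2 N N12"
    and b: "by_incl (pg_A L K le cl) M0 M3 N12 N"
  have NK: "N \<in> K" using leD l by blast
  interpret N: pregeometry "univ N" "cl N" using pregeometry_cl[OF NK] .
  have l0: "le M0 N" using l le_trans by blast
  have h1: "le N12 N" "cl N (univ M1 \<union> univ M2) = univ N12" "free_over (cl N) (univ M0) (univ M1) (univ M2)"
    using o pg_amalgam_iff_free_in unfolding is_oplus_pg_A_iff by blast+
  have h2: "cl N (univ M3 \<union> univ N12) = univ N" "free_over (cl N) (univ M0) (univ M3) (univ N12)"
    using b pg_amalgam_iff_free_in[OF le_refl[OF NK]] unfolding by_incl_pg_A_iff by blast+
  have cl: "N.closed (univ M0)" "N.closed (univ M1)" "N.closed (univ M2)" "N.closed (univ M3)"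
    using closed_le l l0 by blast+
  have sb: "univ M0 \<subseteq> univ M1" "univ M0 \<subseteq> univ M2" "univ M0 \<subseteq> univ M3" using le_univ l by blast+
  have U: "univ M1 \<subseteq> univ N" "univ M2 \<subseteq> univ N" "univ M3 \<subseteq> univ N" using le_univ l by blast+
  note T = N.free_over_three_monotone[OF cl sb h1(3), unfolded h1(2), OF h2(2)]
  define N13 where "N13 = restr L N (cl N (univ M1 \<union> univ M3))"
  define N23 where "N23 = restr L N (cl N (univ M2 \<union> univ M3))"
  have L13: "le N13 N" "le M1 N13" "le M3 N13" using le_restr_cl_Un[OF l(1,4,6)] unfolding N13_def by blast+
  have L23: "le N23 N" "le M2 N23" "le M3 N23" using le_restr_cl_Un[OF l(2,5,6)] unfolding N23_def by blast+
  have "is_oplus le (pg_A L K le cl) M0 M1 M3 N N13" "is_oplus le (pg_A L K le cl) M0 M2 M3 N N23"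
    unfolding is_oplus_pg_A_iff pg_amalgam_iff_free_in[OF L13(1)] pg_amalgam_iff_free_in[OF L23(1)]
    using L13 L23 T(1,2) l unfolding N13_def N23_def by auto
  moreover have "cl N (univ N13 \<union> univ N23) = univ N"
    using N.cl_Un_cl_Un[OF U] h2(1) h1(2) unfolding N13_def N23_def by (simp add: Un_commute)
  then have "by_incl (pg_A L K le cl) M3 N13 N23 N"
    unfolding by_incl_pg_A_iff pg_amalgam_iff_free_in[OF le_refl[OF NK]]
    using L13 L23 T(3) unfolding N13_def N23_def by auto
  ultimately show "\<exists>N13 N23. is_oplus le (pg_A L K le cl) M0 M1 M3 N N13 \<and>
      is_oplus le (pg_A L K le cl) M0 M2 M3 N N23 \<and> by_incl (pg_A L K le cl) M3 N13 N23 N"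
    by blast
qed

end

section \<open>Regularity\<close>

context aec_pregeom begin

lemma kembD:
  assumes "kemb L K le g M N"
  shows "M \<in> K" "N \<in> K" "inj_on g (univ M)" "le (restr L N (g ` univ M)) N"
    "iso L g M (restr L N (g ` univ M))" "g ` univ M \<subseteq> univ N"
  using assms le_univ[of "restr L N (g ` univ M)" N] unfolding kemb_def by auto

lemma le_restr_kemb_image:
  assumes "le M' M" "kemb L K le g M N"
  shows "le (restr L N (g ` univ M')) N"
proof -
  let ?R = "restr L N (g ` univ M)"
  have "restr L ?R (g ` univ M') = restr L N (g ` univ M')"
    using restr_restr le_univ[OF assms(1)] by (metis image_mono)
  then show ?thesis
    using le_iso_image[OF assms(1) kembD(5)[OF assms(2)]] kembD(4)[OF assms(2)] le_trans by metis
qed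

lemma kemb_restrict:
  assumes "le M' M" "kemb L K le g M N"
  shows "kemb L K le (restrict g (univ M')) M' N"
proof -
  have im: "restrict g (univ M') ` univ M' = g ` univ M'" by auto
  have l: "le (restr L N (g ` univ M')) N" using le_restr_kemb_image[OF assms] .
  have e: "restr L (restr L N (g ` univ M)) (g ` univ M') = restr L N (g ` univ M')"
    using restr_restr le_univ[OF assms(1)] by (metis image_mono)
  have "iso L g M' (restr L (restr L N (g ` univ M)) (g ` univ M'))"
  proof (rule iso_restrict_substruc[OF kembD(5)[OF assms(2)]])
    show "substruc L M' M" using leD[OF assms(1)] by blast
    show "is_struc L (restr L (restr L N (g ` univ M)) (g ` univ M'))"
      unfolding e using K_is_struc leD[OF l] by blast
  qed
  then have "iso L g M' (restr L N (g ` univ M'))" unfolding e .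
  then have "iso L (restrict g (univ M')) M' (restr L N (g ` univ M'))" by (rule iso_cong[rotated]) simp
  moreover have "inj_on (restrict g (univ M')) (univ M')"
    using kembD(3)[OF assms(2)] le_univ[OF assms(1)] inj_on_subset unfolding inj_on_def by auto
  ultimately show ?thesis unfolding kemb_def im using l leD[OF assms(1)] kembD(2)[OF assms(2)] by blast
qed

lemma kemb_target:
  assumes "kemb L K le g M N" "le N' N" "g ` univ M \<subseteq> univ N'"
  shows "kemb L K le g M N'"
proof -
  have e: "restr L N' (g ` univ M) = restr L N (g ` univ M)" using restr_le_eq[OF assms(2,3)] .
  have "le (restr L N (g ` univ M)) N'"
    using le_coherence[OF kembD(4)[OF assms(1)] assms(2)] assms(3) by simp
  then show ?thesis using kembD[OF assms(1)] leD[OF assms(2)] unfolding kemb_def e by blast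
qed

lemma comm_squareD:
  assumes "comm_square L K le M0 M1 M2 f N g1 g2"
  shows "le M0 M1" "kemb L K le f M0 M2" "kemb L K le g1 M1 N" "kemb L K le g2 M2 N"
    "\<And>x. x \<in> univ M0 \<Longrightarrow> g2 (f x) = g1 x" "g1 ` univ M0 \<subseteq> g2 ` univ M2"
    "le (restr L N (g1 ` univ M0)) N" "le (restr L N (g1 ` univ M1)) N" "le (restr L N (g2 ` univ M2)) N"
proof -
  show h: "le M0 M1" "kemb L K le f M0 M2" "kemb L K le g1 M1 N" "kemb L K le g2 M2 N"
    "\<And>x. x \<in> univ M0 \<Longrightarrow> g2 (f x) = g1 x" using assms unfolding comm_square_def by blast+
  show "g1 ` univ M0 \<subseteq> g2 ` univ M2"
    using h(5) kembD(6)[OF h(2)] by (force simp: image_subset_iff)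
  show "le (restr L N (g1 ` univ M0)) N" using le_restr_kemb_image[OF h(1) h(3)] .
  show "le (restr L N (g1 ` univ M1)) N" "le (restr L N (g2 ` univ M2)) N" using kembD(4) h by blast+
qed

lemma pg_amalgam_restr_iff:
  assumes X: "le X N" and l: "le (restr L N a0) N" "le (restr L N a1) N" "le (restr L N a2) N"
    and s: "a0 \<subseteq> a1" "a0 \<subseteq> a2"
  shows "pg_amalgam le cl (restr L N a0) (restr L N a1) (restr L N a2) X \<longleftrightarrow>
    a1 \<subseteq> univ X \<and> a2 \<subseteq> univ X \<and> cl N (a1 \<union> a2) = univ X \<and> free_over (cl N) a0 a1 a2"
proof -
  have "le (restr L N a0) (restr L N a1)" "le (restr L N a0) (restr L N a2)"
    using le_coherence[OF l(1)] l(2,3) s by simp_all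
  moreover have "le (restr L N ai) X \<longleftrightarrow> ai \<subseteq> univ X" if "le (restr L N ai) N" for ai
    using le_coherence[OF that X] le_univ[of "restr L N ai" X] by auto
  ultimately show ?thesis using pg_amalgam_iff_free_in[OF X] l by simp
qed

lemma pg_A_iff_free_in:
  assumes cs: "comm_square L K le M0 M1 M2 f N g1 g2" and N: "le N Nb"
  shows "pg_A L K le cl M0 M1 M2 f N g1 g2 \<longleftrightarrow>
    cl Nb (g1 ` univ M1 \<union> g2 ` univ M2) = univ N \<and>
    free_over (cl Nb) (g1 ` univ M0) (g1 ` univ M1) (g2 ` univ M2)"
proof -
  note c = comm_squareD[OF cs]
  have NK: "N \<in> K" using kembD(2)[OF c(3)] .
  have s: "g1 ` univ M0 \<subseteq> g1 ` univ M1" using le_univ[OF c(1)] by blast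
  have U: "g1 ` univ M1 \<union> g2 ` univ M2 \<subseteq> univ N" using kembD(6) c(3,4) by blast
  have "pg_A L K le cl M0 M1 M2 f N g1 g2 \<longleftrightarrow>
      cl N (g1 ` univ M1 \<union> g2 ` univ M2) = univ N \<and>
      free_over (cl N) (g1 ` univ M0) (g1 ` univ M1) (g2 ` univ M2)"
    using pg_amalgam_restr_iff[OF le_refl[OF NK] c(7,8,9) s c(6)] cs kembD(6) c(3,4)
    unfolding pg_A_def by auto
  also have "\<dots> \<longleftrightarrow> cl Nb (g1 ` univ M1 \<union> g2 ` univ M2) = univ N \<and>
      free_over (cl Nb) (g1 ` univ M0) (g1 ` univ M1) (g2 ` univ M2)"
    using cl_le[OF N] U s free_over_cong[of "univ N" "cl N" "cl Nb"] by auto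
  finally show ?thesis .
qed

lemma pg_A_iff_free:
  assumes "comm_square L K le M0 M1 M2 f N g1 g2"
  shows "pg_A L K le cl M0 M1 M2 f N g1 g2 \<longleftrightarrow>
    cl N (g1 ` univ M1 \<union> g2 ` univ M2) = univ N \<and>
    free_over (cl N) (g1 ` univ M0) (g1 ` univ M1) (g2 ` univ M2)"
  using pg_A_iff_free_in[OF assms le_refl] kembD(2)[OF comm_squareD(3)[OF assms]] .

lemma comm_square_left_iff:
  assumes cs: "comm_square L K le M0 M1 M2 f N g1 g2" and m: "le M0 M'" "le M' M1" and N': "le N' N"
  shows "comm_square L K le M0 M' M2 f N' (restrict g1 (univ M')) g2 \<longleftrightarrow>
    g1 ` univ M' \<subseteq> univ N' \<and> g2 ` univ M2 \<subseteq> univ N'"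
proof -
  note c = comm_squareD[OF cs]
  have im: "restrict g1 (univ M') ` univ M' = g1 ` univ M'" by auto
  have "univ M0 \<subseteq> univ M'" using le_univ[OF m(1)] .
  then show ?thesis
    using kemb_target[OF kemb_restrict[OF m(2) c(3)] N'] kemb_target[OF c(4) N'] m(1) c(2,5)
      kembD(6)[of "restrict g1 (univ M')" M' N'] kembD(6)[of g2 M2 N']
    unfolding comm_square_def im by auto
qed

lemma comm_square_right_iff:
  assumes cs: "comm_square L K le M0 M1 M2 f N g1 g2" and m: "le M' M1" and N': "le N' N"
  shows "comm_square L K le M' M1 N' (restrict g1 (univ M')) N g1 id \<longleftrightarrow> g1 ` univ M' \<subseteq> univ N'"
proof -
  note c = comm_squareD[OF cs]
  have im: "restrict g1 (univ M') ` univ M' = g1 ` univ M'" by auto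
  show ?thesis
    using kemb_target[OF kemb_restrict[OF m c(3)] N'] kembD(6)[of "restrict g1 (univ M')" M' N'] m c(3) N'
    unfolding comm_square_def kemb_id_iff im by auto
qed

lemma pg_A_left_iff:
  assumes cs: "comm_square L K le M0 M1 M2 f N g1 g2" and m: "le M0 M'" "le M' M1" and N': "le N' N"
  shows "pg_A L K le cl M0 M' M2 f N' (restrict g1 (univ M')) g2 \<longleftrightarrow>
    g1 ` univ M' \<subseteq> univ N' \<and> g2 ` univ M2 \<subseteq> univ N' \<and>
    cl N (g1 ` univ M' \<union> g2 ` univ M2) = univ N' \<and>
    free_over (cl N) (g1 ` univ M0) (g1 ` univ M') (g2 ` univ M2)"
proof -
  have im: "restrict g1 (univ M') ` univ M0 = g1 ` univ M0" "restrict g1 (univ M') ` univ M' = g1 ` univ M'"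
    using le_univ[OF m(1)] by auto
  show ?thesis
    using pg_A_iff_free_in[of M0 M' M2 f N' "restrict g1 (univ M')" g2 N, OF _ N']
      comm_square_left_iff[OF cs m N'] unfolding im pg_A_def by blast
qed

lemma pg_A_right_iff:
  assumes cs: "comm_square L K le M0 M1 M2 f N g1 g2" and m: "le M' M1" and N': "le N' N"
    and s: "g1 ` univ M' \<subseteq> univ N'"
  shows "pg_A L K le cl M' M1 N' (restrict g1 (univ M')) N g1 id \<longleftrightarrow>
    cl N (g1 ` univ M1 \<union> univ N') = univ N \<and> free_over (cl N) (g1 ` univ M') (g1 ` univ M1) (univ N')"
  using pg_A_iff_free_in[OF _ le_refl] comm_square_right_iff[OF cs m N'] s kembD(2) comm_squareD(3)[OF cs]
  by simp

end

context aec_pregeom begin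

lemma closed_kemb_image:
  "le M' M \<Longrightarrow> kemb L K le g M N \<Longrightarrow> pregeometry.closed (univ N) (cl N) (g ` univ M')"
  using closed_le[OF le_restr_kemb_image] by simp

lemma comm_square_closed:
  assumes "comm_square L K le M0 M1 M2 f N g1 g2"
  shows "pregeometry.closed (univ N) (cl N) (g1 ` univ M0)" "pregeometry.closed (univ N) (cl N) (g1 ` univ M1)"
    "pregeometry.closed (univ N) (cl N) (g2 ` univ M2)"
  using closed_le[OF comm_squareD(7)[OF assms]] closed_le[OF comm_squareD(8)[OF assms]]
    closed_le[OF comm_squareD(9)[OF assms]] by simp_all

lemma pg_A_trivial_decomposition:
  assumes cs: "comm_square L K le M0 M1 M2 f N g1 g2" and A: "pg_A L K le cl M0 M1 M2 f N g1 g2"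
  shows "pg_A L K le cl M0 M0 M2 f (restr L N (g2 ` univ M2)) (restrict g1 (univ M0)) g2"
    and "pg_A L K le cl M0 M1 (restr L N (g2 ` univ M2)) (restrict g1 (univ M0)) N g1 id"
proof -
  note c = comm_squareD[OF cs]
  interpret N: pregeometry "univ N" "cl N" using pregeometry_cl kembD(2)[OF c(3)] by blast
  have M0: "le M0 M0" using le_refl leD[OF c(1)] by blast
  have cl: "N.closed (g1 ` univ M0)" "N.closed (g2 ` univ M2)" using comm_square_closed[OF cs] by simp_all
  then have "cl N (g1 ` univ M0 \<union> g2 ` univ M2) = g2 ` univ M2" using c(6) N.closedD(2) by (simp add: Un_absorb1)
  then show "pg_A L K le cl M0 M0 M2 f (restr L N (g2 ` univ M2)) (restrict g1 (univ M0)) g2"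
    using pg_A_left_iff[OF cs M0 c(1) c(9)] c(6) N.free_over_refl[OF cl c(6)] by simp
  show "pg_A L K le cl M0 M1 (restr L N (g2 ` univ M2)) (restrict g1 (univ M0)) N g1 id"
    using pg_A_right_iff[OF cs c(1) c(9)] c(6) A pg_A_iff_free[OF cs] by simp
qed

lemma pg_A_compose:
  assumes cs: "comm_square L K le M0 M1 M2 f N g1 g2"
    and m: "le M0 M'" "le M' M1" and N': "le N' N"
    and A1: "pg_A L K le cl M0 M' M2 f N' (restrict g1 (univ M')) g2"
    and A2: "pg_A L K le cl M' M1 N' (restrict g1 (univ M')) N g1 id"
  shows "pg_A L K le cl M0 M1 M2 f N g1 g2"
proof -
  note c = comm_squareD[OF cs]
  interpret N: pregeometry "univ N" "cl N" using pregeometry_cl kembD(2)[OF c(3)] by blast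
  have h1: "g1 ` univ M' \<subseteq> univ N'" "cl N (g1 ` univ M' \<union> g2 ` univ M2) = univ N'"
      "free_over (cl N) (g1 ` univ M0) (g1 ` univ M') (g2 ` univ M2)"
    using A1 pg_A_left_iff[OF cs m N'] by blast+
  have h2: "cl N (g1 ` univ M1 \<union> univ N') = univ N" "free_over (cl N) (g1 ` univ M') (g1 ` univ M1) (univ N')"
    using A2 pg_A_right_iff[OF cs m(2) N' h1(1)] by blast+
  have "cl N (g1 ` univ M1 \<union> g2 ` univ M2) = univ N \<and>
      free_over (cl N) (g1 ` univ M0) (g1 ` univ M1) (g2 ` univ M2)"
    using N.free_over_trans[OF comm_square_closed(1)[OF cs] closed_kemb_image[OF m(2) c(3)]
        comm_square_closed(2,3)[OF cs] closed_le[OF N'] _ _ c(6) h1(2,3) h2] le_univ[OF m(1)] le_univ[OF m(2)]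
    by (simp add: image_mono)
  then show ?thesis using pg_A_iff_free[OF cs] by blast
qed

lemma pg_A_left_exists:
  assumes cs: "comm_square L K le M0 M1 M2 f N g1 g2" and A: "pg_A L K le cl M0 M1 M2 f N g1 g2"
    and m: "le M0 M'" "le M' M1"
  shows "\<exists>N'. le N' N \<and> pg_A L K le cl M0 M' M2 f N' (restrict g1 (univ M')) g2"
proof -
  note c = comm_squareD[OF cs]
  interpret N: pregeometry "univ N" "cl N" using pregeometry_cl kembD(2)[OF c(3)] by blast
  have cl: "N.closed (g1 ` univ M')" "N.closed (g1 ` univ M1)" "N.closed (g2 ` univ M2)"
    using closed_kemb_image[OF m(2) c(3)] comm_square_closed[OF cs] by blast+
  have U: "g1 ` univ M' \<union> g2 ` univ M2 \<subseteq> univ N" using cl(1,3) N.closedD(1) by blast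
  define B where "B = restr L N (cl N (g1 ` univ M' \<union> g2 ` univ M2))"
  have LB: "le B N"
    using le_restr_closed[OF c(9) N.closedI[OF U]] N.incl[OF U] unfolding B_def by simp
  have "free_over (cl N) (g1 ` univ M0) (g1 ` univ M1) (g2 ` univ M2)" using A pg_A_iff_free[OF cs] by blast
  then have "free_over (cl N) (g1 ` univ M0) (g1 ` univ M') (g2 ` univ M2)"
    using N.free_over_antimono[OF _ _ N.closedD(1)[OF cl(2)] N.closedD(1)[OF cl(3)]] le_univ[OF m(2)]
    by (simp add: image_mono)
  then have "pg_A L K le cl M0 M' M2 f B (restrict g1 (univ M')) g2"
    using pg_A_left_iff[OF cs m LB] N.incl[OF U] unfolding B_def by simp
  then show ?thesis using LB by blast
qed

lemma pg_A_right_of_left: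
  assumes cs: "comm_square L K le M0 M1 M2 f N g1 g2" and A: "pg_A L K le cl M0 M1 M2 f N g1 g2"
    and m: "le M0 M'" "le M' M1" and N': "le N' N"
    and A1: "pg_A L K le cl M0 M' M2 f N' (restrict g1 (univ M')) g2"
  shows "pg_A L K le cl M' M1 N' (restrict g1 (univ M')) N g1 id"
proof -
  note c = comm_squareD[OF cs]
  interpret N: pregeometry "univ N" "cl N" using pregeometry_cl kembD(2)[OF c(3)] by blast
  have h1: "g1 ` univ M' \<subseteq> univ N'" "cl N (g1 ` univ M' \<union> g2 ` univ M2) = univ N'"
    using A1 pg_A_left_iff[OF cs m N'] by blast+
  have "cl N (g1 ` univ M1 \<union> g2 ` univ M2) = univ N"
      "free_over (cl N) (g1 ` univ M0) (g1 ` univ M1) (g2 ` univ M2)"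
    using A pg_A_iff_free[OF cs] by blast+
  then have "cl N (g1 ` univ M1 \<union> univ N') = univ N \<and> free_over (cl N) (g1 ` univ M') (g1 ` univ M1) (univ N')"
    using N.free_over_lift_base[OF comm_square_closed(1)[OF cs] closed_kemb_image[OF m(2) c(3)]
        comm_square_closed(2,3)[OF cs] _ _ c(6) _ _ h1(2)] le_univ[OF m(1)] le_univ[OF m(2)]
    by (simp add: image_mono)
  then show ?thesis using pg_A_right_iff[OF cs m(2) N' h1(1)] by blast
qed

lemma pg_A_of_all_decompositions:
  assumes cs: "comm_square L K le M0 M1 M2 f N g1 g2"
    and N': "le N' N" "pg_A L K le cl M0 M1 M2 f N' (restrict g1 (univ M1)) g2"
    and A2: "pg_A L K le cl M1 M1 N' (restrict g1 (univ M1)) N g1 id"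
  shows "pg_A L K le cl M0 M1 M2 f N g1 g2"
proof -
  note c = comm_squareD[OF cs]
  have M1: "le M1 M1" using le_refl leD[OF c(1)] by blast
  have h1: "g1 ` univ M1 \<subseteq> univ N'" "cl N (g1 ` univ M1 \<union> g2 ` univ M2) = univ N'"
      "free_over (cl N) (g1 ` univ M0) (g1 ` univ M1) (g2 ` univ M2)"
    using N' pg_A_left_iff[OF cs c(1) M1 N'(1)] by blast+
  have "cl N (g1 ` univ M1 \<union> univ N') = univ N" using A2 pg_A_right_iff[OF cs M1 N'(1) h1(1)] by blast
  then have "univ N' = univ N" using h1(1) cl_univ_le[OF N'(1)] by (simp add: Un_absorb1)
  then show ?thesis using h1 pg_A_iff_free[OF cs] by simp
qed

lemma regular_pg_A: "regular L K le (pg_A L K le cl)"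
  unfolding regular_def
proof (intro allI impI conjI iffI, goal_cases)
  (* cases 1 and 2: (i) iff (ii); cases 3 to 5: (i) iff (iii) *)
  case (1 M0 M1 M2 f N g1 g2)
  have "le M0 M0" "le (restr L N (g2 ` univ M2)) (restr L N (g2 ` univ M2))"
    using le_refl leD comm_squareD(1,9)[OF 1(1)] by blast+
  then show ?case using pg_A_trivial_decomposition[OF 1] comm_squareD(1,9)[OF 1(1)] by blast
next
  case (2 M0 M1 M2 f N g1 g2)
  then show ?case using pg_A_compose[OF 2(1)] by blast
next
  case (3 M0 M1 M2 f N g1 g2 M')
  then show ?case using pg_A_left_exists[OF 3(1,2)] by blast
next
  case (4 M0 M1 M2 f N g1 g2 M' N')
  then show ?case using pg_A_right_of_left[OF 4(1,2)] by blast
next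
  case (5 M0 M1 M2 f N g1 g2)
  have "le M1 M1" using le_refl leD comm_squareD(1)[OF 5(1)] by blast
  then show ?case using 5 pg_A_of_all_decompositions[OF 5(1)] comm_squareD(1)[OF 5(1)] by blast
qed

end

section \<open>Continuity\<close>

context pregeometry begin

lemma closed_UN_chain:
  assumes "J \<noteq> {}" "\<And>k l. k \<in> J \<Longrightarrow> l \<in> J \<Longrightarrow> A k \<subseteq> A l \<or> A l \<subseteq> A k"
    and "\<And>k. k \<in> J \<Longrightarrow> closed (A k)"
  shows "closed (\<Union>k\<in>J. A k)"
proof -
  have U: "(\<Union>k\<in>J. A k) \<subseteq> U" using assms(3) closedD(1) by blast
  have "x \<in> (\<Union>k\<in>J. A k)" if x: "x \<in> c (\<Union>k\<in>J. A k)" for x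
  proof -
    obtain X0 where X0: "X0 \<subseteq> (\<Union>k\<in>J. A k)" "finite X0" "x \<in> c X0" using fin[OF U x] by blast
    then obtain k where k: "k \<in> J" "X0 \<subseteq> A k" using finite_subset_UN_chain[of J A X0] assms(1,2) X0(1,2) by blast
    have "c X0 \<subseteq> A k" using cl_least[OF k(2) assms(3)[OF k(1)]] .
    then show ?thesis using X0(3) k(1) by blast
  qed
  then show ?thesis unfolding closed_def using U incl[OF U] by blast
qed

end

locale pg_amalgam_chain = aec_pregeom L K le cl ity
  for L :: "('f, 'r) lang" and K and le and cl and ity :: "'i itself" +
  fixes I :: "'i set" and r :: "'i rel" and M N :: "'i \<Rightarrow> ('a, 'f, 'r) struc"
    and f :: "'i \<Rightarrow> 'a \<Rightarrow> 'a" and i0 :: 'i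
  assumes chain_M: "incr_cont_chain L le I r M" and chain_N: "incr_cont_chain L le I r N"
    and i0: "i0 \<in> I" "\<forall>j\<in>I. (i0, j) \<in> r"
    and kemb_f: "\<And>i. i \<in> I \<Longrightarrow> kemb L K le (f i) (M i) (N i)"
    and f_compat: "\<And>i j x. i \<in> I \<Longrightarrow> j \<in> I \<Longrightarrow> (i, j) \<in> r \<Longrightarrow> x \<in> univ (M i) \<Longrightarrow> f j x = f i x"
    and succ_pg_A: "\<And>i j. i \<in> I \<Longrightarrow> j \<in> I \<Longrightarrow> is_succ I r i j \<Longrightarrow>
      pg_A L K le cl (M i) (M j) (N i) (f i) (N j) (f j) id"
begin

abbreviation "BM \<equiv> union_struc L (M ` I)"
abbreviation "BN \<equiv> union_struc L (N ` I)"
abbreviation "F \<equiv> union_fun I M f"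
abbreviation "img i \<equiv> f i ` univ (M i)"

lemma well_order: "well_order_on I r"
  using chain_M unfolding incr_cont_chain_def by blast

lemma I_ne: "I \<noteq> {}"
  using i0 by blast

lemma total: "i \<in> I \<Longrightarrow> j \<in> I \<Longrightarrow> (i, j) \<in> r \<or> (j, i) \<in> r"
  using well_order_on_total[OF well_order] .

lemma le_M: "i \<in> I \<Longrightarrow> j \<in> I \<Longrightarrow> (i, j) \<in> r \<Longrightarrow> le (M i) (M j)"
  using chain_M unfolding incr_cont_chain_def by blast

lemma img_mono: "i \<in> I \<Longrightarrow> j \<in> I \<Longrightarrow> (i, j) \<in> r \<Longrightarrow> img i \<subseteq> img j"
proof
  fix y assume h: "i \<in> I" "j \<in> I" "(i, j) \<in> r" and "y \<in> img i"
  then obtain x where x: "x \<in> univ (M i)" "y = f i x" by blast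
  then have "y = f j x" "x \<in> univ (M j)" using f_compat[OF h x(1)] le_univ[OF le_M[OF h]] by auto
  then show "y \<in> img j" by blast
qed

lemma img_chain: "k \<in> I \<Longrightarrow> l \<in> I \<Longrightarrow> img k \<subseteq> img l \<or> img l \<subseteq> img k"
  using total[of k l] img_mono[of k l] img_mono[of l k] by blast

lemma img_limit:
  assumes "j \<in> I" "is_limit_pt I r j"
  shows "img j = (\<Union>k\<in>{k\<in>I. wlt r k j}. img k)" "univ (N j) = (\<Union>k\<in>{k\<in>I. wlt r k j}. univ (N k))"
proof -
  let ?J = "{k\<in>I. wlt r k j}"
  have "univ (M j) = (\<Union>k\<in>?J. univ (M k))"
    using chain_M assms unfolding incr_cont_chain_def by simp
  then have "img j = (\<Union>k\<in>?J. f j ` univ (M k))" by (simp add: image_UN)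
  also have "\<dots> = (\<Union>k\<in>?J. img k)"
    using f_compat[OF _ assms(1)] unfolding wlt_def by (intro SUP_cong refl image_cong) auto
  finally show "img j = (\<Union>k\<in>?J. img k)" .
  show "univ (N j) = (\<Union>k\<in>?J. univ (N k))"
    using chain_N assms unfolding incr_cont_chain_def by simp
qed

lemma union_fun_eq: "i \<in> I \<Longrightarrow> x \<in> univ (M i) \<Longrightarrow> F x = f i x"
proof -
  assume h: "i \<in> I" "x \<in> univ (M i)"
  define j where "j = (SOME j. j \<in> I \<and> x \<in> univ (M j))"
  have j: "j \<in> I" "x \<in> univ (M j)" using someI[of "\<lambda>j. j \<in> I \<and> x \<in> univ (M j)" i] h unfolding j_def by blast+
  then show "F x = f i x" using total[OF h(1) j(1)] f_compat h unfolding union_fun_def j_def[symmetric] by metis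
qed

lemma union_M_finite_subset: "finite X \<Longrightarrow> X \<subseteq> univ BM \<Longrightarrow> \<exists>k\<in>I. X \<subseteq> univ (M k)"
proof -
  have "univ (M k) \<subseteq> univ (M l) \<or> univ (M l) \<subseteq> univ (M k)" if "k \<in> I" "l \<in> I" for k l
    using total[OF that] le_univ[OF le_M] that by blast
  then show "finite X \<Longrightarrow> X \<subseteq> univ BM \<Longrightarrow> \<exists>k\<in>I. X \<subseteq> univ (M k)"
    using finite_subset_UN_chain[OF I_ne, of "\<lambda>i. univ (M i)" X] by (simp add: image_image)
qed

lemma BN_in_K: "BN \<in> K" and le_BN: "i \<in> I \<Longrightarrow> le (N i) BN"
  using le_union_chain[OF chain_N] by blast+

lemma BM_in_K: "BM \<in> K" and le_BM: "i \<in> I \<Longrightarrow> le (M i) BM"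
  using le_union_chain[OF chain_M] by blast+

lemma image_F: "F ` univ BM = (\<Union>i\<in>I. img i)"
  using union_fun_eq by (auto simp: image_iff) (metis UN_iff union_fun_eq)

lemma img_subset_N: "i \<in> I \<Longrightarrow> img i \<subseteq> univ (N i)"
  using kembD(6)[OF kemb_f] .

lemma le_restr_img: "i \<in> I \<Longrightarrow> le (restr L BN (img i)) BN"
  using le_trans[OF kembD(4)[OF kemb_f] le_BN] restr_le_eq[OF le_BN img_subset_N] by simp

lemma closed_img: "i \<in> I \<Longrightarrow> pregeometry.closed (univ BN) (cl BN) (img i)"
  using closed_le[OF le_restr_img] by simp

lemma closed_N: "i \<in> I \<Longrightarrow> pregeometry.closed (univ BN) (cl BN) (univ (N i))"
  using closed_le[OF le_BN] .

lemma le_restr_image_F: "le (restr L BN (F ` univ BM)) BN"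
proof -
  interpret BN: pregeometry "univ BN" "cl BN" using pregeometry_cl[OF BN_in_K] .
  have "BN.closed (\<Union>i\<in>I. img i)" by (rule BN.closed_UN_chain[OF I_ne img_chain closed_img])
  then show ?thesis
    unfolding image_F using le_restr_closed[OF le_restr_img[OF i0(1)]] UN_upper[OF i0(1), of img] by simp
qed

lemma union_M_tuple:
  assumes "tup n (univ BM) xs"
  obtains k where "k \<in> I" "tup n (univ (M k)) xs" "map F xs = map (f k) xs"
proof -
  obtain k where k: "k \<in> I" "set xs \<subseteq> univ (M k)"
    using union_M_finite_subset[of "set xs"] assms unfolding tup_def by auto
  then show ?thesis
    using that assms map_cong_on[of "univ (M k)" F "f k"] union_fun_eq unfolding tup_def by blast
qed

lemma F_fint:
  assumes t: "tup (fst L g) (univ BM) xs"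
  shows "F (fint BM g xs) = fint (restr L BN (F ` univ BM)) g (map F xs)"
proof -
  obtain k where k: "k \<in> I" and tk: "tup (fst L g) (univ (M k)) xs" and mF: "map F xs = map (f k) xs"
    using union_M_tuple[OF t] .
  note fk = kembD[OF kemb_f[OF k]]
  have "F (fint BM g xs) = f k (fint (M k) g xs)"
    using substruc_fint[OF _ tk] leD[OF le_BM[OF k]] union_fun_eq[OF k]
      is_struc_fint_in[OF K_is_struc[OF fk(1)] tk] by metis
  also have "\<dots> = fint (N k) g (map (f k) xs)"
    using isoD(4)[OF fk(5) tk] restr_fint[OF tup_map[OF tk]] by simp
  also have "\<dots> = fint BN g (map (f k) xs)"
    using substruc_fint[OF _ tup_mono[OF tup_map[OF tk] fk(6)]] leD[OF le_BN[OF k]] by blast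
  also have "\<dots> = fint (restr L BN (F ` univ BM)) g (map F xs)"
    unfolding mF[symmetric] by (rule restr_fint[OF tup_map[OF t], symmetric])
  finally show ?thesis .
qed

lemma F_rint:
  assumes t: "tup (snd L g) (univ BM) xs"
  shows "rint (restr L BN (F ` univ BM)) g (map F xs) = rint BM g xs"
proof -
  obtain k where k: "k \<in> I" and tk: "tup (snd L g) (univ (M k)) xs" and mF: "map F xs = map (f k) xs"
    using union_M_tuple[OF t] .
  note fk = kembD[OF kemb_f[OF k]]
  have "rint (restr L BN (F ` univ BM)) g (map F xs) = rint BN g (map (f k) xs)"
    unfolding restr_rint mF[symmetric] using tup_map[OF t, of F] by simp
  also have "\<dots> = rint (N k) g (map (f k) xs)"
    using substruc_rint[OF _ tup_mono[OF tup_map[OF tk] fk(6)]] leD[OF le_BN[OF k]] by metis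
  also have "\<dots> = rint (M k) g xs"
    using isoD(5)[OF fk(5) tk] tup_map[OF tk, of "f k"] by (simp add: restr_rint)
  also have "\<dots> = rint BM g xs" using substruc_rint[OF _ tk] leD[OF le_BM[OF k]] by metis
  finally show ?thesis .
qed

lemma iso_F: "iso L F BM (restr L BN (F ` univ BM))"
proof (rule isoI)
  show "is_struc L BM" using K_is_struc[OF BM_in_K] .
  show "is_struc L (restr L BN (F ` univ BM))" using K_is_struc leD[OF le_restr_image_F] by blast
  show "bij_betw F (univ BM) (univ (restr L BN (F ` univ BM)))"
    unfolding bij_betw_def univ_restr
  proof (rule conjI[OF inj_onI refl])
    fix x y assume xy: "x \<in> univ BM" "y \<in> univ BM" "F x = F y"
    obtain k where k: "k \<in> I" "{x, y} \<subseteq> univ (M k)" using union_M_finite_subset[of "{x, y}"] xy by auto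
    then show "x = y" using xy(3) union_fun_eq[OF k(1)] kembD(3)[OF kemb_f[OF k(1)]]
      unfolding inj_on_def by auto
  qed
qed (fact F_fint F_rint)+

lemma kemb_F: "kemb L K le F BM BN"
  unfolding kemb_def using BM_in_K BN_in_K iso_F le_restr_image_F bij_betw_imp_inj_on[OF isoD(3)[OF iso_F]]
  by blast

lemma comm_square_union: "comm_square L K le (M i0) BM (N i0) (f i0) BN F id"
  unfolding comm_square_def kemb_id_iff
  using le_BM[OF i0(1)] kemb_f[OF i0(1)] kemb_F le_BN[OF i0(1)] union_fun_eq[OF i0(1)] by simp

text \<open>The invariant of the transfinite induction: every stage \<open>N j\<close> is the free amalgam of the image
  of \<open>M j\<close> and \<open>N i0\<close> over the image of \<open>M i0\<close>, computed in the pregeometry of the union.\<close>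
definition stage_free :: "'i \<Rightarrow> bool" where
  "stage_free j \<longleftrightarrow> cl BN (img j \<union> univ (N i0)) = univ (N j) \<and>
     free_over (cl BN) (img i0) (img j) (univ (N i0))"

lemma stage_free_succ:
  assumes ij: "i \<in> I" "j \<in> I" "is_succ I r i j" and IH: "stage_free i"
  shows "stage_free j"
proof -
  interpret BN: pregeometry "univ BN" "cl BN" using pregeometry_cl[OF BN_in_K] .
  have rij: "(i, j) \<in> r" using ij(3) unfolding is_succ_def wlt_def by blast
  have A: "pg_A L K le cl (M i) (M j) (N i) (f i) (N j) (f j) id" using succ_pg_A[OF ij] .
  then have cs: "comm_square L K le (M i) (M j) (N i) (f i) (N j) (f j) id" unfolding pg_A_def by blast
  have e: "f j ` univ (M i) = img i" using f_compat[OF ij(1,2) rij] by (auto intro: image_cong)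
  have "cl BN (img j \<union> univ (N i)) = univ (N j) \<and> free_over (cl BN) (img i) (img j) (univ (N i))"
    using A pg_A_iff_free_in[OF cs le_BN[OF ij(2)]] e by simp
  moreover have "img i0 \<subseteq> img i" "img i0 \<subseteq> univ (N i0)"
    using img_mono[OF i0(1) ij(1)] i0(2) ij(1) img_subset_N[OF i0(1)] by blast+
  ultimately show ?thesis
    using IH BN.free_over_trans[OF closed_img[OF i0(1)] closed_img[OF ij(1)] closed_img[OF ij(2)]
        closed_N[OF i0(1)] closed_N[OF ij(1)]] img_mono[OF ij(1,2) rij]
    unfolding stage_free_def by blast
qed

lemma stage_free_UN:
  assumes J: "J \<subseteq> I" "J \<noteq> {}" and IH: "\<And>k. k \<in> J \<Longrightarrow> stage_free k"
    and closed: "pregeometry.closed (univ BN) (cl BN) (\<Union>k\<in>J. univ (N k))"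
  shows "cl BN ((\<Union>k\<in>J. img k) \<union> univ (N i0)) = (\<Union>k\<in>J. univ (N k)) \<and>
    free_over (cl BN) (img i0) (\<Union>k\<in>J. img k) (univ (N i0))"
proof
  interpret BN: pregeometry "univ BN" "cl BN" using pregeometry_cl[OF BN_in_K] .
  have k: "BN.closed (img k)" "img i0 \<subseteq> img k" "cl BN (img k \<union> univ (N i0)) = univ (N k)"
      "free_over (cl BN) (img i0) (img k) (univ (N i0))" if "k \<in> J" for k
  proof -
    have "k \<in> I" using that J(1) by blast
    then show "BN.closed (img k)" "img i0 \<subseteq> img k" using closed_img img_mono[OF i0(1)] i0(2) by blast+
    show "cl BN (img k \<union> univ (N i0)) = univ (N k)" "free_over (cl BN) (img i0) (img k) (univ (N i0))"
      using IH[OF that] unfolding stage_free_def by blast+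
  qed
  show "cl BN ((\<Union>k\<in>J. img k) \<union> univ (N i0)) = (\<Union>k\<in>J. univ (N k))"
    by (rule BN.cl_UN_Un[OF J(2) _ BN.closedD(1)[OF closed_N[OF i0(1)]] closed])
      (use BN.closedD(1)[OF k(1)] k(3) in blast)
  have ch: "img k \<subseteq> img l \<or> img l \<subseteq> img k" if "k \<in> J" "l \<in> J" for k l
    using img_chain that J(1) by blast
  have "BN.closed (img k) \<and> img i0 \<subseteq> img k \<and> free_over (cl BN) (img i0) (img k) (univ (N i0))"
    if "k \<in> J" for k
    using k[OF that] by blast
  then show "free_over (cl BN) (img i0) (\<Union>k\<in>J. img k) (univ (N i0))"
    using BN.free_over_UN_chain[OF J(2) ch closed_img[OF i0(1)] closed_N[OF i0(1)] img_subset_N[OF i0(1)]]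
    by simp
qed

lemma stage_free_least: "stage_free i0"
proof -
  interpret BN: pregeometry "univ BN" "cl BN" using pregeometry_cl[OF BN_in_K] .
  show ?thesis
    using BN.closedD(2)[OF closed_N[OF i0(1)]] img_subset_N[OF i0(1)]
      BN.free_over_refl[OF closed_img[OF i0(1)] closed_N[OF i0(1)]]
    unfolding stage_free_def by (simp add: Un_absorb1)
qed

lemma stage_free_limit:
  assumes j: "j \<in> I" "is_limit_pt I r j" and IH: "\<And>k. k \<in> I \<Longrightarrow> wlt r k j \<Longrightarrow> stage_free k"
  shows "stage_free j"
proof -
  have "{k \<in> I. wlt r k j} \<noteq> {}" using j(2) unfolding is_limit_pt_def by blast
  then show "stage_free j"
    using stage_free_UN[of "{k \<in> I. wlt r k j}"] IH img_limit[OF j] closed_N[OF j(1)]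
    unfolding stage_free_def by auto
qed

lemma stage_free_all: "j \<in> I \<Longrightarrow> stage_free j"
  using well_order_on_induct[OF well_order i0, of stage_free] stage_free_least stage_free_succ
    stage_free_limit by blast

lemma pg_A_union: "pg_A L K le cl (M i0) BM (N i0) (f i0) BN F id"
proof -
  interpret BN: pregeometry "univ BN" "cl BN" using pregeometry_cl[OF BN_in_K] .
  have "BN.closed (\<Union>k\<in>I. univ (N k))" using closed_le[OF le_refl[OF BN_in_K]] by (simp add: image_image)
  then have "cl BN ((\<Union>k\<in>I. img k) \<union> univ (N i0)) = univ BN \<and>
      free_over (cl BN) (img i0) (\<Union>k\<in>I. img k) (univ (N i0))"
    using stage_free_UN[OF order_refl I_ne stage_free_all] by simp
  moreover have "F ` univ (M i0) = img i0" using union_fun_eq[OF i0(1)] by simp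
  ultimately show ?thesis using pg_A_iff_free[OF comm_square_union] image_F by simp
qed

end

context aec_pregeom begin

lemma continuous_pg_A: "continuous_amalg ity L K le (pg_A L K le cl)"
  unfolding continuous_amalg_def
proof (intro allI impI, elim conjE)
  fix I :: "'i set" and r M N f i0
  assume h: "incr_cont_chain L le I r M" "incr_cont_chain L le I r N" "i0 \<in> I" "\<forall>j\<in>I. (i0, j) \<in> r"
    "\<forall>i\<in>I. kemb L K le (f i) (M i) (N i)"
    "\<forall>i\<in>I. \<forall>j\<in>I. (i, j) \<in> r \<longrightarrow> (\<forall>x\<in>univ (M i). f j x = f i x)"
    "\<forall>i\<in>I. \<forall>j\<in>I. is_succ I r i j \<longrightarrow> pg_A L K le cl (M i) (M j) (N i) (f i) (N j) (f j) id"
  interpret pg_amalgam_chain L K le cl ity I r M N f i0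
    by (unfold_locales; use aec pgs h in blast)
  show "pg_A L K le cl (M i0) (union_struc L (M ` I)) (N i0) (f i0) (union_struc L (N ` I))
      (union_fun I M f) id"
    by (rule pg_A_union)
qed

end

section \<open>Sequential amalgams have finite character\<close>

locale pg_seq_amalgam = aec_pregeom L K le cl ity
  for L :: "('f, 'r) lang" and K and le and cl and ity :: "'i itself" +
  fixes I :: "'i set" and r :: "'i rel" and Mf :: "'i \<Rightarrow> ('a, 'f, 'r) struc"
    and Mb N :: "('a, 'f, 'r) struc" and P :: "'i \<Rightarrow> ('a, 'f, 'r) struc"
  assumes well_order: "well_order_on I r" and le_Mb_N: "le Mb N"
    and le_Mb_P: "\<And>i. i \<in> I \<Longrightarrow> le Mb (P i)"
    and le_P_P: "\<And>i j. i \<in> I \<Longrightarrow> j \<in> I \<Longrightarrow> (j, i) \<in> r \<Longrightarrow> le (P j) (P i)"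
    and P_least: "\<And>i. i \<in> I \<Longrightarrow> \<forall>j\<in>I. (i, j) \<in> r \<Longrightarrow> P i = Mf i"
    and P_step: "\<And>i. i \<in> I \<Longrightarrow> \<not> (\<forall>j\<in>I. (i, j) \<in> r) \<Longrightarrow>
       (\<forall>j\<in>I. wlt r j i \<longrightarrow> le (P j) (union_struc L (P ` {k\<in>I. wlt r k i}))) \<and>
       le (union_struc L (P ` {k\<in>I. wlt r k i})) (P i) \<and>
       pg_amalgam le cl Mb (union_struc L (P ` {k\<in>I. wlt r k i})) (Mf i) (P i)"
    and N_eq: "N = union_struc L (insert Mb (P ` I))"
begin

definition before :: "'i \<Rightarrow> 'i set" where
  "before i = {k\<in>I. wlt r k i}"

abbreviation "U i \<equiv> union_struc L (P ` before i)"

text \<open>\<open>B i\<close> is the stage \<open>N_i\<close> of the paper (\<open>Mb\<close> is added so that it is also defined at the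
  least index).  Unlike \<open>P\<close>, it is a continuous chain, so the chain axiom applies to it.\<close>
abbreviation "B i \<equiv> union_struc L (insert Mb (P ` before i))"

lemma before_iff: "k \<in> before i \<longleftrightarrow> k \<in> I \<and> (k, i) \<in> r \<and> k \<noteq> i"
  unfolding before_def wlt_def by blast

lemma before_ne_iff: "i \<in> I \<Longrightarrow> before i \<noteq> {} \<longleftrightarrow> \<not> (\<forall>j\<in>I. (i, j) \<in> r)"
  using well_order_on_not_least_iff[OF well_order] unfolding before_def by blast

lemma total: "i \<in> I \<Longrightarrow> j \<in> I \<Longrightarrow> (i, j) \<in> r \<or> (j, i) \<in> r"
  using well_order_on_total[OF well_order] .

lemma P_in_K: "i \<in> I \<Longrightarrow> P i \<in> K"
  using le_Mb_P leD by blast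

lemma univ_Mb_P: "i \<in> I \<Longrightarrow> univ Mb \<subseteq> univ (P i)"
  using le_univ[OF le_Mb_P] .

lemma univ_P_mono: "i \<in> I \<Longrightarrow> j \<in> I \<Longrightarrow> (j, i) \<in> r \<Longrightarrow> univ (P j) \<subseteq> univ (P i)"
  using le_univ[OF le_P_P] .

lemma stages_chain:
  "X \<in> insert Mb (P ` I) \<Longrightarrow> Y \<in> insert Mb (P ` I) \<Longrightarrow> univ X \<subseteq> univ Y \<or> univ Y \<subseteq> univ X"
  using total univ_P_mono univ_Mb_P by blast

lemma U_step:
  assumes "i \<in> I" "before i \<noteq> {}"
  shows "\<And>j. j \<in> before i \<Longrightarrow> le (P j) (U i)" "le (U i) (P i)" "pg_amalgam le cl Mb (U i) (Mf i) (P i)"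
  using P_step[OF assms(1)] assms before_ne_iff unfolding before_def by blast+

lemma before_stages_chain:
  "X \<in> insert Mb (P ` before i) \<Longrightarrow> Y \<in> insert Mb (P ` before i) \<Longrightarrow>
    univ X \<subseteq> univ Y \<or> univ Y \<subseteq> univ X"
  using stages_chain[of X Y] before_iff by blast

lemma B_eq_U: assumes "i \<in> I" "before i \<noteq> {}" shows "B i = U i"
proof -
  have sub: "substruc L X (P i)" if "X \<in> insert Mb (P ` before i)" for X
    using that le_Mb_P[OF assms(1)] le_P_P[OF assms(1)] leD before_iff by blast
  have sub': "substruc L X (P i)" if "X \<in> P ` before i" for X
    using that sub by blast
  have ch': "univ X \<subseteq> univ Y \<or> univ Y \<subseteq> univ X" if "X \<in> P ` before i" "Y \<in> P ` before i" for X Y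
    using before_stages_chain[of X i Y] that by blast
  have "B i = restr L (P i) (\<Union>(univ ` insert Mb (P ` before i)))"
    by (rule union_struc_chain_eq_restr[OF _ before_stages_chain sub]) simp
  also have "\<Union>(univ ` insert Mb (P ` before i)) = \<Union>(univ ` P ` before i)"
  proof -
    obtain k where "k \<in> before i" using assms(2) by blast
    then have "univ Mb \<subseteq> \<Union>(univ ` P ` before i)" using univ_Mb_P before_iff by blast
    then show ?thesis by auto
  qed
  also have "restr L (P i) \<dots> = U i"
    by (rule union_struc_chain_eq_restr[OF _ ch' sub', symmetric]) (use assms(2) in simp)
  finally show ?thesis .
qed

lemma B_least: "before i = {} \<Longrightarrow> B i = Mb"
  using union_struc_greatest[of Mb "{Mb}" L] leD[OF le_refl] leD[OF le_Mb_N] by simp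

lemma le_B_P: "i \<in> I \<Longrightarrow> le (B i) (P i)"
proof (cases "before i = {}")
  case True
  then show "i \<in> I \<Longrightarrow> le (B i) (P i)" using B_least le_Mb_P by metis
next
  case False
  then show "i \<in> I \<Longrightarrow> le (B i) (P i)" using B_eq_U U_step(2) by metis
qed

lemma le_P_B: assumes "i \<in> before j" "j \<in> I" shows "le (P i) (B j)"
proof -
  have "before j \<noteq> {}" using assms(1) by blast
  then show ?thesis using U_step(1)[OF assms(2) _ assms(1)] B_eq_U[OF assms(2)] by simp
qed

lemma le_B_B: "i \<in> I \<Longrightarrow> j \<in> I \<Longrightarrow> (i, j) \<in> r \<Longrightarrow> le (B i) (B j)"
  using le_refl leD[OF le_B_P] le_trans[OF le_B_P le_P_B] before_iff by metis

lemma B_limit: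
  assumes i: "i \<in> I" "is_limit_pt I r i"
  shows "B i = union_struc L (B ` before i)"
proof -
  have ne: "before i \<noteq> {}" using i(2) unfolding is_limit_pt_def before_def by blast
  have subP: "substruc L X (P i)" if "X \<in> P ` before i" for X
    using that le_P_P[OF i(1)] leD before_iff by blast
  have subB: "substruc L X (P i)" if "X \<in> B ` before i" for X
    using that le_trans[OF le_B_P le_P_P[OF i(1)]] leD before_iff by blast
  have chP: "univ X \<subseteq> univ Y \<or> univ Y \<subseteq> univ X" if "X \<in> P ` before i" "Y \<in> P ` before i" for X Y
    using before_stages_chain[of X i Y] that by blast
  have chB: "univ X \<subseteq> univ Y \<or> univ Y \<subseteq> univ X" if XY: "X \<in> B ` before i" "Y \<in> B ` before i" for X Y
  proof -
    obtain k where k: "k \<in> before i" "X = B k" using XY(1) by (rule imageE)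
    obtain l where l: "l \<in> before i" "Y = B l" using XY(2) by (rule imageE)
    have "k \<in> I" "l \<in> I" using k(1) l(1) before_iff by blast+
    then show ?thesis
      unfolding k(2) l(2) using total le_univ[OF le_B_B] by meson
  qed
  have PB: "univ (P k) \<subseteq> \<Union>(univ ` B ` before i)" if k: "k \<in> before i" for k
  proof -
    obtain k' where "k' \<in> I" "wlt r k k'" "wlt r k' i"
      using i(2) k unfolding is_limit_pt_def before_def by blast
    then have "k' \<in> before i" "k \<in> before k'" using k unfolding before_def by blast+
    have "univ (P k) \<subseteq> univ (B k')" using \<open>k \<in> before k'\<close> by (auto simp: image_image)
    moreover have "univ (B k') \<subseteq> \<Union>(univ ` B ` before i)"
      using \<open>k' \<in> before i\<close> by (intro Union_upper imageI)
    ultimately show ?thesis by (rule subset_trans)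
  qed
  have BP: "univ (B k) \<subseteq> \<Union>(univ ` P ` before i)" if k: "k \<in> before i" for k
  proof -
    have "k \<in> I" using k before_iff by blast
    then show ?thesis using le_univ[OF le_B_P] k by blast
  qed
  have e: "\<Union>(univ ` P ` before i) = \<Union>(univ ` B ` before i)"
    by (intro equalityI Union_least) (auto simp del: union_univ dest: PB BP)
  have "U i = restr L (P i) (\<Union>(univ ` P ` before i))"
    by (rule union_struc_chain_eq_restr[OF _ chP subP]) (use ne in simp)
  also have "\<dots> = union_struc L (B ` before i)"
    unfolding e by (rule union_struc_chain_eq_restr[OF _ chB subB, symmetric]) (use ne in simp)
  finally show ?thesis using B_eq_U[OF i(1) ne] by simp
qed

end

context pg_seq_amalgam begin

lemma chain_B: "I \<noteq> {} \<Longrightarrow> incr_cont_chain L le I r B"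
  unfolding incr_cont_chain_def
  using well_order le_B_B B_limit by (simp add: before_def)

lemma univ_stages_eq_univ_B:
  assumes I: "I \<noteq> {}" and no_max: "\<And>i. i \<in> I \<Longrightarrow> \<exists>j\<in>I. i \<in> before j"
  shows "\<Union>(univ ` insert Mb (P ` I)) = \<Union>(univ ` B ` I)"
proof (intro equalityI Union_least)
  fix X assume "X \<in> univ ` insert Mb (P ` I)"
  then consider "X = univ Mb" | k where "k \<in> I" "X = univ (P k)" by blast
  then obtain j where j: "j \<in> I" "X \<subseteq> univ (B j)"
  proof cases
    case 1
    then show ?thesis using I that by fastforce
  next
    case 2
    then obtain j where "j \<in> I" "k \<in> before j" using no_max by blast
    then show ?thesis using 2 that by (auto simp: image_image)
  qed
  moreover have "univ (B j) \<subseteq> \<Union>(univ ` B ` I)" using j(1) by (intro Union_upper imageI)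
  ultimately show "X \<subseteq> \<Union>(univ ` B ` I)" by blast
next
  fix X assume "X \<in> univ ` B ` I"
  then show "X \<subseteq> \<Union>(univ ` insert Mb (P ` I))" using before_iff by auto
qed

lemma N_eq_union_B:
  assumes I: "I \<noteq> {}" and no_max: "\<And>i. i \<in> I \<Longrightarrow> \<exists>j\<in>I. i \<in> before j"
  shows "N = union_struc L (B ` I)"
proof -
  define Z where "Z = union_struc L (B ` I)"
  have Z: "\<And>j. j \<in> I \<Longrightarrow> le (B j) Z" using le_union_chain[OF chain_B[OF I]] unfolding Z_def by blast
  have le_P_Z: "le (P k) Z" if "k \<in> I" for k
    using no_max[OF that] le_trans[OF le_P_B Z] by blast
  have subN: "substruc L X Z" if "X \<in> insert Mb (P ` I)" for X
    using that le_P_Z le_trans[OF le_Mb_P le_P_Z] I leD by blast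
  have subB: "substruc L X Z" if "X \<in> B ` I" for X
    using that Z leD by blast
  have chB: "univ X \<subseteq> univ Y \<or> univ Y \<subseteq> univ X" if XY: "X \<in> B ` I" "Y \<in> B ` I" for X Y
  proof -
    obtain k where k: "k \<in> I" "X = B k" using XY(1) by (rule imageE)
    obtain l where l: "l \<in> I" "Y = B l" using XY(2) by (rule imageE)
    show ?thesis unfolding k(2) l(2) using total[OF k(1) l(1)] le_univ[OF le_B_B] k(1) l(1) by meson
  qed
  have "N = restr L Z (\<Union>(univ ` insert Mb (P ` I)))"
    unfolding N_eq by (rule union_struc_chain_eq_restr[OF _ stages_chain subN]) simp
  also have "\<dots> = restr L Z (\<Union>(univ ` B ` I))" using univ_stages_eq_univ_B[OF assms] by simp
  also have "\<dots> = Z"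
    unfolding Z_def by (rule union_struc_chain_eq_restr[OF _ chB subB, unfolded Z_def, symmetric]) (use I in simp)
  finally show ?thesis unfolding Z_def .
qed

lemma le_P_N:
  assumes "i \<in> I"
  shows "le (P i) N"
proof (cases "\<exists>m\<in>I. \<forall>k\<in>I. (k, m) \<in> r")
  case True
  then obtain m where m: "m \<in> I" "\<forall>k\<in>I. (k, m) \<in> r" by blast
  have "substruc L X (P m)" if "X \<in> insert Mb (P ` I)" for X
    using that le_Mb_P[OF m(1)] le_P_P[OF m(1)] m(2) leD by blast
  then have "N = P m" unfolding N_eq using m(1) by (intro union_struc_greatest) blast+
  then show ?thesis using le_P_P[OF m(1) assms] m(2) assms by simp
next
  case False
  then have no_max: "\<exists>j\<in>I. i \<in> before j" if "i \<in> I" for i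
    using that total well_order_on_refl[OF well_order] unfolding before_iff by metis
  have I: "I \<noteq> {}" using assms by blast
  obtain j where j: "j \<in> I" "i \<in> before j" using no_max[OF assms] by blast
  have "le (P i) (union_struc L (B ` I))"
    using le_trans[OF le_P_B[OF j(2,1)] le_union_chain(2)[OF chain_B[OF I] j(1)]] .
  then show ?thesis using N_eq_union_B[OF I no_max] by simp
qed

lemma Mf_props:
  assumes "i \<in> I"
  shows "le (Mf i) N" "le Mb (Mf i)" "univ (Mf i) \<subseteq> univ (P i)"
proof -
  have "le Mb (Mf i) \<and> le (Mf i) (P i)"
  proof (cases "before i = {}")
    case True
    then show ?thesis using P_least[OF assms] before_ne_iff[OF assms] le_Mb_P[OF assms] le_refl P_in_K[OF assms]
      by auto
  next
    case False
    then show ?thesis using U_step(3)[OF assms False] unfolding pg_amalgam_def by blast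
  qed
  then show "le (Mf i) N" "le Mb (Mf i)" "univ (Mf i) \<subseteq> univ (P i)"
    using le_trans[OF _ le_P_N[OF assms]] le_univ by blast+
qed

lemma U_step_free:
  assumes "i \<in> I" "before i \<noteq> {}"
  shows "le (U i) N" "cl N (univ (U i) \<union> univ (Mf i)) = univ (P i)"
    "free_over (cl N) (univ Mb) (univ (U i)) (univ (Mf i))"
    "\<And>j. j \<in> before i \<Longrightarrow> univ (P j) \<subseteq> univ (U i)"
  using le_trans[OF U_step(2)[OF assms] le_P_N[OF assms(1)]]
    pg_amalgam_iff_free_in[OF le_P_N[OF assms(1)]] U_step[OF assms] le_univ by blast+

end

context pg_seq_amalgam begin

definition span :: "'i set \<Rightarrow> 'a set" where
  "span T = cl N (univ Mb \<union> (\<Union>k\<in>T. univ (Mf k)))"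

lemma N_in_K: "N \<in> K"
  using leD[OF le_Mb_N] by blast

lemma generators_subset_N: "T \<subseteq> I \<Longrightarrow> univ Mb \<union> (\<Union>k\<in>T. univ (Mf k)) \<subseteq> univ N"
  using le_univ[OF le_Mb_N] le_univ[OF Mf_props(1)] by blast

lemma span_closed: "T \<subseteq> I \<Longrightarrow> pregeometry.closed (univ N) (cl N) (span T)"
  unfolding span_def using pregeometry.closedI[OF pregeometry_cl[OF N_in_K] generators_subset_N] .

lemma generators_subset_span: "T \<subseteq> I \<Longrightarrow> univ Mb \<union> (\<Union>k\<in>T. univ (Mf k)) \<subseteq> span T"
  unfolding span_def using pregeometry.incl[OF pregeometry_cl[OF N_in_K] generators_subset_N] .

lemma span_mono: "T \<subseteq> T' \<Longrightarrow> T' \<subseteq> I \<Longrightarrow> span T \<subseteq> span T'"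
  unfolding span_def using pregeometry.mono[OF pregeometry_cl[OF N_in_K] _ generators_subset_N]
  by (meson UN_mono Un_mono order_refl)

lemma P_subset_finite_span_step:
  assumes i: "i \<in> I" "before i \<noteq> {}" and x: "x \<in> univ (P i)"
    and IH: "\<And>k z. k \<in> before i \<Longrightarrow> z \<in> univ (P k) \<Longrightarrow> \<exists>T. T \<subseteq> I \<and> finite T \<and> z \<in> span T"
  shows "\<exists>T. T \<subseteq> I \<and> finite T \<and> x \<in> span T"
proof -
  interpret N: pregeometry "univ N" "cl N" using pregeometry_cl[OF N_in_K] .
  note h = U_step_free[OF i]
  have "univ (U i) \<union> univ (Mf i) \<subseteq> univ N" using le_univ[OF h(1)] le_univ[OF Mf_props(1)[OF i(1)]] by blast
  then obtain Z where Z: "Z \<subseteq> univ (U i) \<union> univ (Mf i)" "finite Z" "x \<in> cl N Z"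
    using N.fin[of "univ (U i) \<union> univ (Mf i)" x] x h(2) by auto
  have "\<exists>T. T \<subseteq> I \<and> finite T \<and> z \<in> span T" if z: "z \<in> univ (U i)" for z
  proof -
    obtain k where "k \<in> before i" "z \<in> univ (P k)" using z by (auto simp: image_iff)
    then show ?thesis using IH by blast
  qed
  then have "\<forall>z\<in>Z \<inter> univ (U i). \<exists>T. T \<subseteq> I \<and> finite T \<and> z \<in> span T" by blast
  then obtain g where g: "\<forall>z\<in>Z \<inter> univ (U i). g z \<subseteq> I \<and> finite (g z) \<and> z \<in> span (g z)"
    by metis
  define T where "T = insert i (\<Union>z\<in>Z \<inter> univ (U i). g z)"
  have T: "T \<subseteq> I" "finite T" using g i Z(2) unfolding T_def by auto
  have "z \<in> span T" if "z \<in> Z" for z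
  proof (cases "z \<in> univ (U i)")
    case True
    then show ?thesis using span_mono[of "g z" T] T g that unfolding T_def by blast
  next
    case False
    then show ?thesis using generators_subset_span[OF T(1)] Z(1) that unfolding T_def by blast
  qed
  then have "cl N Z \<subseteq> span T" using N.cl_least span_closed[OF T(1)] by blast
  then show ?thesis using Z(3) T by blast
qed

lemma P_subset_finite_span:
  assumes "i \<in> I" "x \<in> univ (P i)"
  shows "\<exists>T. T \<subseteq> I \<and> finite T \<and> x \<in> span T"
proof -
  have "wf (r - Id)" using well_order unfolding well_order_on_def by blast
  then have "i \<in> I \<longrightarrow> (\<forall>x\<in>univ (P i). \<exists>T. T \<subseteq> I \<and> finite T \<and> x \<in> span T)"
  proof (induction i rule: wf_induct_rule)
    case (less i)
    show ?case
    proof (intro impI ballI)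
      fix x assume i: "i \<in> I" and x: "x \<in> univ (P i)"
      show "\<exists>T. T \<subseteq> I \<and> finite T \<and> x \<in> span T"
      proof (cases "before i = {}")
        case True
        then have "P i = Mf i" using P_least[OF i] before_ne_iff[OF i] by blast
        then have "x \<in> univ (Mf i)" using x by simp
        then show ?thesis using generators_subset_span[of "{i}"] i by (intro exI[of _ "{i}"]) auto
      next
        case False
        show ?thesis using P_subset_finite_span_step[OF i False x] less before_iff by blast
      qed
    qed
  qed
  then show ?thesis using assms by blast
qed

lemma N_subset_finite_span:
  assumes "I \<noteq> {}" "a \<in> univ N"
  shows "\<exists>S. S \<subseteq> I \<and> finite S \<and> S \<noteq> {} \<and> a \<in> span S"
proof -
  obtain i0 where i0: "i0 \<in> I" using assms(1) by blast
  obtain T where T: "T \<subseteq> I" "finite T" "a \<in> span T"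
  proof (cases "a \<in> univ Mb")
    case True
    then show ?thesis using that[of "{i0}"] i0 generators_subset_span[of "{i0}"] by blast
  next
    case False
    then obtain i where "i \<in> I" "a \<in> univ (P i)" using assms(2) unfolding N_eq by auto
    then show ?thesis using P_subset_finite_span that by blast
  qed
  then show ?thesis using span_mono[of T "insert i0 T"] i0 by (intro exI[of _ "insert i0 T"]) auto
qed

end

locale pg_seq_amalgam_finite = pg_seq_amalgam L K le cl ity I r Mf Mb N P
  for L :: "('f, 'r) lang" and K le cl and ity :: "'i itself" and I r Mf Mb N P +
  fixes S :: "'i set"
  assumes S: "finite S" "S \<subseteq> I" "S \<noteq> {}"
begin

definition upto :: "'i \<Rightarrow> 'i set" where
  "upto s = {k\<in>S. (k, s) \<in> r}"

definition Q :: "'i \<Rightarrow> ('a, 'f, 'r) struc" where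
  "Q s = restr L N (span (upto s))"

lemma upto_subset: "upto s \<subseteq> I"
  using S(2) unfolding upto_def by blast

lemma trans_r: "trans r"
  using well_order_on_trans[OF well_order] .

lemma Q_props:
  assumes "s \<in> S"
  shows "le (Q s) N" "univ (Q s) = span (upto s)" "le Mb (Q s)"
proof -
  have "univ Mb \<subseteq> span (upto s)" using generators_subset_span[OF upto_subset] by blast
  then show "le (Q s) N" "le Mb (Q s)"
    unfolding Q_def using le_restr_closed[OF le_Mb_N span_closed[OF upto_subset]] le_coherence[OF le_Mb_N]
    by auto
  show "univ (Q s) = span (upto s)" unfolding Q_def by simp
qed

lemma le_Q_Q: "s \<in> S \<Longrightarrow> t \<in> S \<Longrightarrow> (s, t) \<in> r \<Longrightarrow> le (Q s) (Q t)"
proof -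
  assume st: "s \<in> S" "t \<in> S" "(s, t) \<in> r"
  then have "upto s \<subseteq> upto t" using trans_r unfolding upto_def trans_def by blast
  then show ?thesis using le_coherence Q_props st span_mono[OF _ upto_subset] by metis
qed

lemma total_S: "i \<in> S \<Longrightarrow> j \<in> S \<Longrightarrow> (i, j) \<in> r \<or> (j, i) \<in> r"
  using total S(2) by blast

lemma Q_least:
  assumes s: "s \<in> S" "\<forall>j\<in>S. (s, j) \<in> r"
  shows "Q s = Mf s"
proof -
  have sI: "s \<in> I" using s S(2) by blast
  have "upto s = {s}"
    using s well_order_on_refl[OF well_order sI] well_order_on_antisym[OF well_order]
    unfolding upto_def antisym_def by blast
  moreover have "univ Mb \<union> univ (Mf s) = univ (Mf s)" using le_univ[OF Mf_props(2)[OF sI]] by blast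
  ultimately have "span (upto s) = univ (Mf s)" unfolding span_def using cl_univ_le[OF Mf_props(1)[OF sI]] by simp
  then show ?thesis unfolding Q_def using restr_univ_le[OF Mf_props(1)[OF sI]] by simp
qed

lemma predecessor_exists:
  assumes s: "s \<in> S" "\<not> (\<forall>j\<in>S. (s, j) \<in> Restr r S)"
  shows "\<exists>p\<in>S. wlt r p s \<and> (\<forall>k\<in>S. wlt r k s \<longrightarrow> (k, p) \<in> r)"
proof -
  let ?W = "{k\<in>S. wlt r k s}"
  have "?W \<noteq> {}"
    using s total_S well_order_on_refl[OF well_order] S(2) unfolding wlt_def by blast
  then obtain p where "p \<in> ?W" "\<forall>k\<in>?W. (k, p) \<in> r"
    using finite_total_has_greatest[of ?W r] S(1) total_S trans_r by auto
  then show ?thesis by blast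
qed

lemma upto_predecessor:
  assumes s: "s \<in> S" and p: "p \<in> S" "wlt r p s" "\<forall>k\<in>S. wlt r k s \<longrightarrow> (k, p) \<in> r"
  shows "upto s = insert s (upto p)"
  using s p trans_r well_order_on_refl[OF well_order] S(2) unfolding upto_def wlt_def trans_def by blast

lemma Q_step:
  assumes s: "s \<in> S" and p: "p \<in> S" "wlt r p s" "\<forall>k\<in>S. wlt r k s \<longrightarrow> (k, p) \<in> r"
  shows "pg_amalgam le cl Mb (Q p) (Mf s) (Q s)"
proof -
  interpret N: pregeometry "univ N" "cl N" using pregeometry_cl[OF N_in_K] .
  have sI: "s \<in> I" and pI: "p \<in> I" using s p S(2) by blast+
  have ne: "before s \<noteq> {}" using pI p(2) unfolding before_def by blast
  note h = U_step_free[OF sI ne]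
  have span_s: "span (upto s) = cl N (span (upto p) \<union> univ (Mf s))"
    using N.cl_Un_cl_left[OF generators_subset_N[OF upto_subset] le_univ[OF Mf_props(1)[OF sI]]]
    unfolding span_def upto_predecessor[OF s p] by (simp add: Un_ac)
  have "univ Mb \<union> (\<Union>k\<in>upto p. univ (Mf k)) \<subseteq> univ (U s)"
  proof -
    have "univ Mb \<subseteq> univ (U s)" using h(4) univ_Mb_P[OF pI] pI p(2) unfolding before_def by blast
    moreover have "univ (Mf k) \<subseteq> univ (U s)" if "k \<in> upto p" for k
    proof -
      have "k \<in> before s"
        using that p s S(2) trans_r well_order_on_antisym[OF well_order]
        unfolding upto_def before_def wlt_def trans_def antisym_def by blast
      then show ?thesis using h(4) Mf_props(3) before_iff by blast
    qed
    ultimately show ?thesis by blast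
  qed
  then have "span (upto p) \<subseteq> univ (U s)" unfolding span_def using N.cl_least closed_le[OF h(1)] by blast
  then have free: "free_over (cl N) (univ Mb) (span (upto p)) (univ (Mf s))"
    using N.free_over_antimono[OF h(3)] le_univ[OF h(1)] le_univ[OF Mf_props(1)[OF sI]] by blast
  have "le (Q p) (Q s)" "le (Mf s) (Q s)"
    using le_Q_Q[OF p(1) s] p(2) le_coherence[OF Mf_props(1)[OF sI] Q_props(1)[OF s]]
      Q_props(2)[OF s] generators_subset_span[OF upto_subset, of s] s well_order_on_refl[OF well_order sI]
    unfolding wlt_def upto_def by auto
  then show ?thesis
    using pg_amalgam_iff_free_in[OF Q_props(1)[OF s]] Q_props[OF p(1)] Q_props[OF s] Mf_props(2)[OF sI]
      span_s free by auto
qed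

lemma union_Q_greatest:
  assumes "p \<in> T" "T \<subseteq> S" "\<forall>k\<in>T. (k, p) \<in> r"
  shows "union_struc L (Q ` T) = Q p"
  using union_struc_greatest[of "Q p" "Q ` T"] assms le_Q_Q leD by blast

lemma Q_nonleast:
  assumes s: "s \<in> S" "\<not> (\<forall>j\<in>S. (s, j) \<in> Restr r S)"
  defines "W \<equiv> {k\<in>S. wlt (Restr r S) k s}"
  shows "(\<forall>j\<in>S. wlt (Restr r S) j s \<longrightarrow> le (Q j) (union_struc L (Q ` W))) \<and>
    le (union_struc L (Q ` W)) (Q s) \<and> by_incl (pg_A L K le cl) Mb (union_struc L (Q ` W)) (Mf s) (Q s)"
proof -
  obtain p where p: "p \<in> S" "wlt r p s" "\<forall>k\<in>S. wlt r k s \<longrightarrow> (k, p) \<in> r"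
    using predecessor_exists[OF s] by blast
  have W: "W = {k\<in>S. wlt r k s}" using s(1) unfolding W_def wlt_def by blast
  have "union_struc L (Q ` W) = Q p" unfolding W by (rule union_Q_greatest) (use p in auto)
  moreover have "le (Q j) (Q p)" if "j \<in> S" "wlt (Restr r S) j s" for j
    using le_Q_Q[OF that(1) p(1)] p(3) that unfolding wlt_def by blast
  moreover have "le (Q p) (Q s)" using le_Q_Q[OF p(1) s(1)] p(2) unfolding wlt_def by blast
  moreover have "by_incl (pg_A L K le cl) Mb (Q p) (Mf s) (Q s)"
    using Q_step[OF s(1) p] by_incl_pg_A_iff by blast
  ultimately show ?thesis by simp
qed

lemma seq_amalg_Q:
  obtains smax where "seq_amalg L le (pg_A L K le cl) S (Restr r S) Mf Mb (Q smax)"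
    "univ (Q smax) = span S" "le (Q smax) N"
proof -
  obtain smax where smax: "smax \<in> S" "\<forall>k\<in>S. (k, smax) \<in> r"
    using finite_total_has_greatest[OF S(1,3) total_S trans_r] by blast
  have up: "upto smax = S" using smax unfolding upto_def by blast
  have U: "union_struc L (insert Mb (Q ` S)) = Q smax"
    using union_struc_greatest[of "Q smax" "insert Mb (Q ` S)"] smax Q_props le_Q_Q leD by blast
  have wS: "well_order_on S (Restr r S)"
    using well_order_on_Well_order[OF well_order] S(2) well_order_on_Restr by metis
  have "seq_amalg L le (pg_A L K le cl) S (Restr r S) Mf Mb (Q smax)"
    unfolding seq_amalg_def
  proof (intro conjI exI[of _ Q] ballI impI)
    show "le Mb (Q smax)" using Q_props(3)[OF smax(1)] .
    show "le Mb (Q i)" if "i \<in> S" for i using Q_props(3)[OF that] .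
    show "le (Q j) (Q i)" if "i \<in> S" "j \<in> S" "(j, i) \<in> Restr r S" for i j
      using le_Q_Q that by blast
    show "Q i = Mf i" if "i \<in> S" "\<forall>j\<in>S. (i, j) \<in> Restr r S" for i
      using Q_least that by blast
  qed (use Q_nonleast wS U in auto)
  then show ?thesis using that Q_props[OF smax(1)] up by simp
qed

end

context pg_seq_amalgam begin

lemma finite_subamalgam_containing:
  assumes "a \<in> univ N"
  shows "\<exists>S\<subseteq>I. finite S \<and> (\<exists>N'. le N' N \<and> seq_amalg L le (pg_A L K le cl) S (Restr r S) Mf Mb N' \<and> a \<in> univ N')"
proof (cases "I = {}")
  case True
  have "seq_amalg L le (pg_A L K le cl) {} (Restr r {}) Mf Mb N"
    unfolding seq_amalg_def using le_Mb_N N_eq True by (intro conjI exI[of _ P]) simp_all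
  then show ?thesis using le_refl[OF N_in_K] assms True by blast
next
  case False
  then obtain S where hS: "S \<subseteq> I" "finite S" "S \<noteq> {}" "a \<in> span S"
    using N_subset_finite_span assms by blast
  interpret pg_seq_amalgam_finite L K le cl ity I r Mf Mb N P S
    by (intro pg_seq_amalgam_finite.intro pg_seq_amalgam_axioms pg_seq_amalgam_finite_axioms.intro)
      (use hS in blast)+
  obtain smax where sm: "seq_amalg L le (pg_A L K le cl) S (Restr r S) Mf Mb (Q smax)"
      "univ (Q smax) = span S" "le (Q smax) N"
    by (rule seq_amalg_Q)
  show ?thesis
    by (rule exI[of _ S], intro conjI exI[of _ "Q smax"]) (use hS sm in simp_all)
qed

end

context aec_pregeom begin

lemma mu_is_aleph0_pg_A: "mu_is_aleph0 ity L le (pg_A L K le cl)"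
  unfolding mu_is_aleph0_def
proof (intro allI impI, elim conjE)
  fix I :: "'i set" and r Mf Mb N a
  assume sa: "seq_amalg L le (pg_A L K le cl) I r Mf Mb N" and a: "a \<in> univ N"
  obtain P where P: "\<forall>i\<in>I. le Mb (P i)" "\<forall>i\<in>I. \<forall>j\<in>I. (j, i) \<in> r \<longrightarrow> le (P j) (P i)"
      "\<forall>i\<in>I. (\<forall>j\<in>I. (i, j) \<in> r) \<longrightarrow> P i = Mf i"
      "\<forall>i\<in>I. \<not> (\<forall>j\<in>I. (i, j) \<in> r) \<longrightarrow>
         (\<forall>j\<in>I. wlt r j i \<longrightarrow> le (P j) (union_struc L (P ` {k\<in>I. wlt r k i}))) \<and>
         le (union_struc L (P ` {k\<in>I. wlt r k i})) (P i) \<and>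
         by_incl (pg_A L K le cl) Mb (union_struc L (P ` {k\<in>I. wlt r k i})) (Mf i) (P i)"
      "N = union_struc L (insert Mb (P ` I))"
    using sa unfolding seq_amalg_def by blast
  interpret pg_seq_amalgam L K le cl ity I r Mf Mb N P
    by (intro pg_seq_amalgam.intro aec_pregeom_axioms pg_seq_amalgam_axioms.intro)
      (use sa P in \<open>auto simp: seq_amalg_def by_incl_pg_A_iff\<close>)
  show "\<exists>S\<subseteq>I. finite S \<and> (\<exists>N'. le N' N \<and> seq_amalg L le (pg_A L K le cl) S (Restr r S) Mf Mb N' \<and>
      a \<in> univ N')"
    by (rule finite_subamalgam_containing[OF a])
qed

end

theorem mainTheorem19:
  fixes L :: "('f, 'r) lang"
    and K :: "('a, 'f, 'r) struc set"
    and le :: "('a, 'f, 'r) struc \<Rightarrow> ('a, 'f, 'r) struc \<Rightarrow> bool"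
    and cl :: "('a, 'f, 'r) struc \<Rightarrow> 'a set \<Rightarrow> 'a set"
  assumes "aec TYPE('i) L K le"
    and "pregeom_system L K le cl"
  shows "regular L K le (pg_A L K le cl)
       \<and> abs_minimal le (pg_A L K le cl)
       \<and> three_monotonic le (pg_A L K le cl)
       \<and> continuous_amalg TYPE('i) L K le (pg_A L K le cl)
       \<and> admits_decomp le (pg_A L K le cl)
       \<and> mu_is_aleph0 TYPE('i) L le (pg_A L K le cl)"
proof -
  interpret aec_pregeom L K le cl "TYPE('i)" using assms by (rule aec_pregeom.intro)
  show ?thesis
    using regular_pg_A abs_minimal_pg_A three_monotonic_pg_A continuous_pg_A admits_decomp_pg_A
      mu_is_aleph0_pg_A by blast
qed

end
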